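(* Fix integers $n,m\ge1$, $k_1,k_2\ge0$. For every $j\in\mathbb{N}$ with $2j\le k_2$ let $c_{k_1,k_2,j}=(-1)^{k_1+k_2}\frac{3^{k_2-j}k_2!}{2^{k_2-2j}(k_2-2j)!\,j!}$. Then \[4^jL_{j,\psi_\omega}a_{k_1,k_2,\omega}=c_{k_1,k_2,j}\,\omega^{k_2-2j}+O(\omega^{k_2-2j+1})\quad\text{as }\omega\to0^+.\]
   Context: Let $u_1$ be the first standard basis vector of $\mathbb{R}^m$. $\theta(\lambda)=\frac{2\lambda-\sin(2\lambda)}{2\sin^2\lambda}$ ($\theta(0)=0$) is an odd increasing diffeomorphism $(-\pi,\pi)\to\mathbb{R}$; for $\omega\ge0$, $y_\omega=\theta^{-1}(\omega)\in[0,\pi)$. For $\lambda\in\mathbb{C}^m$ let $\lambda^2=\sum_j\lambda_j^2$ and, for an even holomorphic function $F$, write $F(\sqrt{\lambda^2})$ for the well-defined holomorphic function $F(\zeta)$, $\zeta^2=\lambda^2$. Let $A(z)=(z/\sinh z)^{n+k_1}\cosh(z)^{k_1}$, $B(z)=z\coth z$ ($A(0)=B(0)=1$), $a_{k_1,k_2}(\lambda)=(-1)^{k_1}i^{k_2}A(\sqrt{\lambda^2})(\lambda,u_1)^{k_2}$, $\phi_\omega(\lambda)=\omega(\lambda,u_1)+iB(\sqrt{\lambda^2})$ (complex bilinear $(\cdot,\cdot)$). For $\lambda\in\mathbb{R}^m$: $a_{k_1,k_2,\omega}(\lambda)=a_{k_1,k_2}(\lambda+iy_\omega u_1)$, $\psi_\omega(\lambda)=\phi_\omega(\lambda+iy_\omega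 u_1)-\phi_\omega(iy_\omega u_1)$. For smooth $f,g$ near $0$ with $f''(0)$ invertible, \[L_{j,f}g=i^{-j}\sum_{\mu=0}^{2j}\frac{(f''(0)^{-1}\partial,\partial)^{\mu+j}\big[(f-P_{2,0}f)^\mu g\big](0)}{2^{\mu+j}\mu!(\mu+j)!},\] with $P_{2,0}f$ the order-$2$ Taylor polynomial of $f$ at $0$ and $(A\partial,\partial)=\sum_{k,l}A_{kl}\partial_k\partial_l$. *)

theory Defs
  imports "HOL-Analysis.Analysis" "HOL-Library.Landau_Symbols"
begin

definition theta :: "real \<Rightarrow> real" where
  "theta l = (if l = 0 then 0 else (2*l - sin (2*l)) / (2 * (sin l)^2))"

definition yom :: "real \<Rightarrow> real" where
  "yom w = (THE y. -pi < y \<and> y < pi \<and> theta y = w)"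

definition Afun :: "nat \<Rightarrow> nat \<Rightarrow> complex \<Rightarrow> complex" where
  "Afun n k1 z = (if z = 0 then 1 else (z / sinh z)^(n+k1) * (cosh z)^k1)"

definition Bfun :: "complex \<Rightarrow> complex" where
  "Bfun z = (if z = 0 then 1 else z * (cosh z / sinh z))"

text \<open>complex bilinear form on C^m, lambda^2, and F(sqrt(lambda^2)) for even F\<close>
definition cbil :: "complex^'m::finite \<Rightarrow> complex^'m \<Rightarrow> complex" where
  "cbil v w = (\<Sum>k\<in>UNIV. v$k * w$k)"

definition csq :: "complex^'m::finite \<Rightarrow> complex" where
  "csq v = cbil v v"

definition evenapp :: "(complex \<Rightarrow> complex) \<Rightarrow> complex^'m::finite \<Rightarrow> complex" where
  "evenapp F v = F (csqrt (csq v))"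

definition cvec :: "real^'m::finite \<Rightarrow> complex^'m" where
  "cvec x = (\<chi> k. complex_of_real (x$k))"

text \<open>u1 is the basis vector axis i 1 (i the distinguished first coordinate)\<close>
definition a_fun :: "nat \<Rightarrow> nat \<Rightarrow> nat \<Rightarrow> 'm::finite \<Rightarrow> complex^'m \<Rightarrow> complex" where
  "a_fun n k1 k2 i v = (-1)^k1 * \<i>^k2 * evenapp (Afun n k1) v * (cbil v (axis i 1))^k2"

definition phi :: "real \<Rightarrow> 'm::finite \<Rightarrow> complex^'m \<Rightarrow> complex" where
  "phi w i v = complex_of_real w * cbil v (axis i 1) + \<i> * evenapp Bfun v"

definition a_om :: "nat \<Rightarrow> nat \<Rightarrow> nat \<Rightarrow> 'm::finite \<Rightarrow> real \<Rightarrow> real^'m \<Rightarrow> complex" where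
  "a_om n k1 k2 i w x = a_fun n k1 k2 i (cvec x + axis i (\<i> * complex_of_real (yom w)))"

definition psi :: "real \<Rightarrow> 'm::finite \<Rightarrow> real^'m \<Rightarrow> complex" where
  "psi w i x = phi w i (cvec x + axis i (\<i> * complex_of_real (yom w)))
              - phi w i (axis i (\<i> * complex_of_real (yom w)))"

definition pd :: "'m::finite \<Rightarrow> (real^'m \<Rightarrow> complex) \<Rightarrow> real^'m \<Rightarrow> complex" where
  "pd k g x = vector_derivative (\<lambda>t. g (x + t *\<^sub>R axis k 1)) (at 0)"

definition hess0 :: "(real^'m::finite \<Rightarrow> complex) \<Rightarrow> complex^'m^'m" where
  "hess0 f = (\<chi> k l. pd k (pd l f) 0)"

definition taylor2 :: "(real^'m::finite \<Rightarrow> complex) \<Rightarrow> real^'m \<Rightarrow> complex" where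
  "taylor2 f x = f 0 + (\<Sum>k\<in>UNIV. pd k f 0 * complex_of_real (x$k))
      + (1/2) * (\<Sum>k\<in>UNIV. \<Sum>l\<in>UNIV. pd k (pd l f) 0 * complex_of_real (x$k) * complex_of_real (x$l))"

definition Dop :: "complex^'m^'m \<Rightarrow> (real^'m::finite \<Rightarrow> complex) \<Rightarrow> real^'m \<Rightarrow> complex" where
  "Dop A h x = (\<Sum>k\<in>UNIV. \<Sum>l\<in>UNIV. A$k$l * pd k (pd l h) x)"

definition Lop :: "nat \<Rightarrow> (real^'m::finite \<Rightarrow> complex) \<Rightarrow> (real^'m \<Rightarrow> complex) \<Rightarrow> complex" where
  "Lop j f g = inverse (\<i>^j) *
     (\<Sum>\<mu>=0..2*j. ((Dop (matrix_inv (hess0 f)) ^^ (\<mu>+j)) (\<lambda>x. (f x - taylor2 f x)^\<mu> * g x)) 0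
        / (2^(\<mu>+j) * fact \<mu> * fact (\<mu>+j)))"

definition ccoef :: "nat \<Rightarrow> nat \<Rightarrow> nat \<Rightarrow> real" where
  "ccoef k1 k2 j = (-1)^(k1+k2) * 3^(k2-j) * fact k2 / (2^(k2-2*j) * fact (k2-2*j) * fact j)"

end

(*
  Put y = y_omega. Since theta y = omega, both psi_omega and a_{k1,k2,omega} become functions
  of (y, x) built from polynomials and the holomorphic functions A(sqrt z), B(sqrt z), and the
  expansion theta y = 2y/3 + O(y^3) gives y_omega = 3 omega/2 + O(omega^2). It therefore
  suffices to expand in powers of y.

  Count x and y with weight one. The remainder psi - P_2 psi vanishes to order 3 and
  a_{k1,k2} to order k2, while the Hessian of psi at 0 is diagonal with entries 2i/3 + O(y).
  Hence the mu-th summand of L_j, which applies mu + j second-order derivatives to a function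
  of order 3 mu + k2, is O(y^(k2 - 2j + mu)), and only mu = 0 contributes to the leading
  term. There, up to O(y^(k2 - 2j + 1)), everything is frozen at y = 0 except the 2j-fold
  derivative in x_1 of (x_1 + i y)^k2, and collecting constants gives c_{k1,k2,j}.
*)
theory Submission
  imports Defs "HOL-Real_Asymp.Real_Asymp" "HOL-Complex_Analysis.Complex_Analysis"
begin

lemma theta_eq: "l \<noteq> 0 \<Longrightarrow> theta l = (2*l - sin (2*l)) / (2 * (sin l)^2)"
  by (simp add: theta_def)

lemma theta_minus: "theta (-l) = - theta l"
  by (simp add: theta_def divide_simps)

lemma sin_less_self: "0 < (x::real) \<Longrightarrow> sin x < x"
proof (cases "x > 1")
  case True then show ?thesis using sin_le_one[of x] by linarith
next
  case False
  assume x: "0 < x"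
  have "(\<lambda>t. t - sin t) 0 < (\<lambda>t. t - sin t) x"
  proof (rule DERIV_pos_imp_increasing_open[OF x])
    fix t :: real assume t: "0 < t" "t < x"
    have "cos t < cos 0" using t False pi_gt3 by (intro cos_monotone_0_pi) auto
    then show "\<exists>y. ((\<lambda>t. t - sin t) has_real_derivative y) (at t) \<and> 0 < y"
      by (intro exI[of _ "1 - cos t"]) (auto intro!: derivative_eq_intros)
  next
    show "continuous_on {0..x} (\<lambda>t. t - sin t)" by (intro continuous_intros)
  qed
  then show ?thesis by simp
qed

lemma theta_pos: "0 < l \<Longrightarrow> l < pi \<Longrightarrow> theta l > 0"
  using sin_less_self[of "2*l"] sin_gt_zero[of l] by (simp add: theta_eq)

lemma sin_minus_mult_cos_pos: assumes "0 < y" "y < pi" shows "sin y - y * cos y > 0"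
proof -
  have "(\<lambda>t. sin t - t * cos t) 0 < (\<lambda>t. sin t - t * cos t) y"
  proof (rule DERIV_pos_imp_increasing_open[OF assms(1)])
    fix t :: real assume t: "0 < t" "t < y"
    have "sin t > 0" using t assms by (intro sin_gt_zero) auto
    then show "\<exists>d. ((\<lambda>t. sin t - t * cos t) has_real_derivative d) (at t) \<and> 0 < d"
      using t by (intro exI[of _ "t * sin t"]) (auto intro!: derivative_eq_intros)
  next
    show "continuous_on {0..y} (\<lambda>t. sin t - t * cos t)" by (intro continuous_intros)
  qed
  then show ?thesis by simp
qed

lemma theta_has_pos_derivative:
  assumes "0 < l" "l < pi" shows "\<exists>d. (theta has_real_derivative d) (at l) \<and> d > 0"
proof -
  define sn where "sn = sin l"
  define cs where "cs = cos l"
  have sn: "sn > 0" using assms sin_gt_zero sn_def by auto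
  have g: "sn - l * cs > 0" using sin_minus_mult_cos_pos[OF assms] sn_def cs_def by simp
  have df: "((\<lambda>l. 2 * l - sin(2 * l)) has_real_derivative (2 - 2 * cos(2 * l))) (at l)"
    by (auto intro!: derivative_eq_intros)
  have dg: "((\<lambda>l. 2 * (sin l)^2) has_real_derivative (4 * sin l * cos l)) (at l)"
    by (auto intro!: derivative_eq_intros)
  have der: "((\<lambda>l. (2 * l - sin (2 * l)) / (2 * (sin l)^2)) has_real_derivative
     (((2 - 2 * cos(2 * l)) * (2 * (sin l)^2) - (2 * l - sin(2 * l)) * (4 * sin l * cos l)) /
         (2 * (sin l)^2)^2)) (at l)"
    using DERIV_quotient[OF df dg] sn sn_def by (simp add: mult.commute power2_eq_square)
  have c2: "cos(2 * l) = 1 - 2 * sn^2" unfolding sn_def by (rule cos_double_sin)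
  have s2: "sin(2 * l) = 2 * sn * cs" unfolding sn_def cs_def by (rule sin_double)
  have sc: "cs^2 = 1 - sn^2" unfolding sn_def cs_def using sin_cos_squared_add[of l] by linarith
  have num: "(2 - 2 * (1 - 2 * sn^2)) * (2 * sn^2) - (2 * l - 2 * sn * cs) * (4 * sn * cs) = 8 * sn
      * (sn - l * cs)"
  proof -
    have "(2 - 2 * (1 - 2 * sn^2)) * (2 * sn^2) - (2 * l - 2 * sn * cs) * (4 * sn * cs) = 8 * sn^4
        - 8 * l * sn * cs + 8 * sn^2 * cs^2"
      by (simp add: algebra_simps power2_eq_square power4_eq_xxxx)
    also have "\<dots> = 8 * sn^4 - 8 * l * sn * cs + 8 * sn^2 * (1-sn^2)" by (simp add: sc)
    also have "\<dots> = 8 * sn * (sn - l * cs)" by (simp add: algebra_simps power2_eq_square power4_eq_xxxx)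
    finally show ?thesis .
  qed
  have "((2 - 2 * cos(2 * l)) * (2 * (sin l)^2) - (2 * l - sin(2 * l)) * (4 * sin l * cos l)) /
      (2 * (sin l)^2)^2
      = 8 * sn * (sn - l * cs) / (2 * sn^2)^2"
    unfolding c2 s2 num[symmetric] by (simp add: sn_def cs_def)
  moreover have "8 * sn * (sn - l * cs) / (2 * sn^2)^2 > 0" using sn g by simp
  moreover have "(theta has_real_derivative
     (((2 - 2 * cos(2 * l)) * (2 * (sin l)^2) - (2 * l - sin(2 * l)) * (4 * sin l * cos l)) /
         (2 * (sin l)^2)^2)) (at l)"
    by (rule has_field_derivative_transform_within_open[OF der, of "{0<..}"])
       (use assms in \<open>auto simp: theta_eq\<close>)
  ultimately show ?thesis by metis
qed

lemma theta_strict_mono: "0 < a \<Longrightarrow> a < b \<Longrightarrow> b < pi \<Longrightarrow>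
    theta a < theta b"
  by (rule DERIV_pos_imp_increasing) (auto intro!: theta_has_pos_derivative)

lemma isCont_theta: assumes "-pi < l" "l < pi" shows "isCont theta l"
proof (cases "l = 0")
  case True
  have "((\<lambda>y::real. (2*y - sin (2*y)) / (2 * (sin y)^2)) \<longlongrightarrow> 0) (at 0)"
    by real_asymp
  then have "(theta \<longlongrightarrow> 0) (at 0)"
    by (rule Lim_transform_eventually) (auto simp: eventually_at_filter theta_eq)
  then show ?thesis using True by (simp add: isCont_def theta_def)
next
  case False
  have "sin l \<noteq> 0"
  proof (cases "l > 0")
    case True then show ?thesis using sin_gt_zero[of l] assms by auto
  next
    case f: False then have "sin (-l) > 0" using False assms by (intro sin_gt_zero) auto
    then show ?thesis by auto
  qed
  then have cont: "isCont (\<lambda>y::real. (2*y - sin (2*y)) / (2 * (sin y)^2)) l"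
    by (intro continuous_intros) simp
  moreover have ev: "eventually (\<lambda>y. theta y = (2*y - sin (2*y)) / (2 * (sin y)^2)) (nhds l)"
  proof -
    have "eventually (\<lambda>y. y \<in> -{0}) (nhds l)"
      using False by (intro eventually_nhds_in_open) auto
    then show ?thesis by (rule eventually_mono) (simp add: theta_eq)
  qed
  ultimately show ?thesis using isCont_cong[OF ev] cont by simp
qed

lemma theta_minus_linear_bigo: "(\<lambda>y. theta y - 2*y/3) \<in> O[at_right 0](\<lambda>y. y^3)"
proof -
  have 1: "(\<lambda>y::real. (2*y - sin (2*y)) / (2 * (sin y)^2) - 2*y/3) \<in>
      O[at_right 0](\<lambda>y. y^3)"
    by real_asymp
  have ev: "eventually (\<lambda>y::real. (2*y - sin (2*y)) / (2 * (sin y)^2) - 2*y/3 = theta y -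
      2*y/3) (at_right 0)"
    using eventually_at_right_less[of "0::real"] by (rule eventually_mono) (simp add: theta_eq)
  show ?thesis using landau_o.big.in_cong[OF ev] 1 by simp
qed

lemma yom_theta: assumes "0 < y" "y < pi" shows "yom (theta y) = y"
  unfolding yom_def
proof (rule the_equality)
  show "- pi < y \<and> y < pi \<and> theta y = theta y" using assms by auto
next
  fix z assume z: "- pi < z \<and> z < pi \<and> theta z = theta y"
  have ty: "theta y > 0" using theta_pos assms by auto
  show "z = y"
  proof (rule ccontr)
    assume ne: "z \<noteq> y"
    consider "z = 0" | "z < 0" | "0 < z \<and> z < y" | "y < z" using ne by linarith
    then show False
    proof cases
      case 1 then show ?thesis using z ty by (simp add: theta_def)
    next
      case 2 then have "theta (-z) > 0" using z by (intro theta_pos) auto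
      then show ?thesis using z ty theta_minus[of z] by simp
    next
      case 3 then show ?thesis using theta_strict_mono[of z y] z assms by simp
    next
      case 4 then show ?thesis using theta_strict_mono[of y z] z assms by simp
    qed
  qed
qed

lemma eventually_theta_ge_half: "eventually (\<lambda>y. theta y \<ge> y/2) (at_right 0)"
proof -
  have 1: "eventually (\<lambda>y::real. (2*y - sin (2*y)) / (2 * (sin y)^2) \<ge> y/2) (at_right 0)"
    by real_asymp
  show ?thesis using eventually_conj[OF 1 eventually_at_right_less[of "0::real"]]
    by (rule eventually_mono) (simp add: theta_eq)
qed

lemma eventually_yom:
  "eventually (\<lambda>w. 0 < yom w \<and> theta (yom w) = w \<and> yom w \<le> 2*w) (at_right 0)"
proof -
  obtain b where b: "b > 0" "\<And>y. y > 0 \<Longrightarrow> y < b \<Longrightarrow> theta y \<ge> y/2"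
    using eventually_theta_ge_half unfolding eventually_at_right_field by auto
  define e where "e = min (b/2) 1"
  have e: "0 < e" "e < b" "e < pi" using b pi_gt3 by (auto simp: e_def)
  have "0 < yom w \<and> theta (yom w) = w \<and> yom w \<le> 2*w" if w: "0 < w" "w < theta e" for w
  proof -
    have "\<exists>y. 0 \<le> y \<and> y \<le> e \<and> theta y = w"
    proof (rule IVT)
      show "\<forall>x. 0 \<le> x \<and> x \<le> e \<longrightarrow> isCont theta x"
        using e pi_gt3 by (auto intro!: isCont_theta)
    qed (use w e in \<open>auto simp: theta_def\<close>)
    then obtain y where y: "0 \<le> y" "y \<le> e" "theta y = w" by blast
    have "y \<noteq> 0" using y w by (auto simp: theta_def)
    then have y_pos: "0 < y" "y < pi" using y e by auto
    moreover have "y/2 \<le> w" using b(2)[of y] y_pos y e by simp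
    ultimately show ?thesis using yom_theta[OF y_pos] y by simp
  qed
  moreover have "theta e > 0" using theta_pos e by simp
  ultimately show ?thesis unfolding eventually_at_right_field by blast
qed

lemma filterlim_yom_at_right: "filterlim yom (at_right 0) (at_right 0)"
  unfolding filterlim_at
proof
  show "eventually (\<lambda>w. yom w \<in> {0<..} \<and> yom w \<noteq> 0) (at_right 0)"
    using eventually_yom by (rule eventually_mono) auto
  have l2: "((\<lambda>w::real. 2*w) \<longlongrightarrow> 0) (at_right 0)"
    by (intro tendsto_eq_intros) (auto intro: tendsto_ident_at)
  show "(yom \<longlongrightarrow> 0) (at_right 0)"
  proof (rule tendsto_sandwich[of "\<lambda>w. 0" yom _ "\<lambda>w. 2*w"])
    show "eventually (\<lambda>w. 0 \<le> yom w) (at_right 0)" using eventually_yom by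
        (rule eventually_mono) auto
    show "eventually (\<lambda>w. yom w \<le> 2*w) (at_right 0)" using eventually_yom by
        (rule eventually_mono) auto
  qed (use l2 in auto)
qed

lemma yom_bigo: "yom \<in> O[at_right 0](\<lambda>w. w)"
proof (rule bigoI[of _ 2])
  show "eventually (\<lambda>w. norm (yom w) \<le> 2 * norm w) (at_right 0)"
    using eventually_conj[OF eventually_yom eventually_at_right_less[of "0::real"]]
    by (rule eventually_mono) auto
qed

lemma yom_minus_linear_bigo: "(\<lambda>w. yom w - 3/2 * w) \<in> O[at_right 0](\<lambda>w. w^2)"
proof -
  have "(\<lambda>w. theta (yom w) - 2 * yom w / 3) \<in> O[at_right 0](\<lambda>w. yom w ^ 3)"
    using landau_o.big.compose[OF theta_minus_linear_bigo filterlim_yom_at_right] by simp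
  moreover have ev: "eventually (\<lambda>w. theta (yom w) - 2 * yom w / 3 = - (2/3) * (yom w - 3/2 * w))
      (at_right 0)"
    using eventually_yom by (rule eventually_mono) (auto simp: algebra_simps)
  ultimately have "(\<lambda>w. - (2/3) * (yom w - 3/2 * w)) \<in> O[at_right 0](\<lambda>w. yom w ^ 3)"
    by (simp only: landau_o.big.in_cong[OF ev])
  then have "(\<lambda>w. yom w - 3/2 * w) \<in> O[at_right 0](\<lambda>w. yom w ^ 3)"
    by (subst (asm) landau_o.big.cmult_in_iff) auto
  also have "(\<lambda>w. yom w ^ 3) \<in> O[at_right 0](\<lambda>w. w ^ 3)"
    by (intro landau_o.big_power yom_bigo)
  also have "(\<lambda>w::real. w ^ 3) \<in> O[at_right 0](\<lambda>w. w ^ 2)" by real_asymp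
  finally show ?thesis .
qed

(* cosh (sqrt z) and sinh (sqrt z) / sqrt z as entire power series in z; they make
   A and B composed with a square root holomorphic near 0. *)
definition cosh_sqrt_coeff :: "nat \<Rightarrow> complex" where "cosh_sqrt_coeff n = inverse (fact (2*n))"
definition sinhc_sqrt_coeff :: "nat \<Rightarrow> complex" where "sinhc_sqrt_coeff n = inverse (fact (2*n+1))"
definition cosh_sqrt :: "complex \<Rightarrow> complex" where "cosh_sqrt z =
    (\<Sum>n. cosh_sqrt_coeff n * z^n)"
definition sinhc_sqrt :: "complex \<Rightarrow> complex" where "sinhc_sqrt z =
    (\<Sum>n. sinhc_sqrt_coeff n * z^n)"

lemma summable_inverse_fact_reindex:
  fixes z :: complex
  assumes "\<And>n. n \<le> g n"
  shows "summable (\<lambda>n. inverse (fact (g n)) * z^n)"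
proof (rule summable_comparison_test[OF _ summable_exp[of "norm z"]])
  have "inverse (fact (g n) :: real) \<le> inverse (fact n)" for n
    using assms by (intro le_imp_inverse_le fact_mono) auto
  then show "\<exists>N. \<forall>n\<ge>N. norm (inverse (fact (g n)) * z ^ n) \<le> inverse
      (fact n) * norm z ^ n"
    by (auto simp: norm_mult norm_power norm_inverse mult_right_mono simp del: fact_Suc)
qed

lemma summable_cosh_sqrt: "summable (\<lambda>n. cosh_sqrt_coeff n * z^n)"
  unfolding cosh_sqrt_coeff_def by (rule summable_inverse_fact_reindex) simp

lemma summable_sinhc_sqrt: "summable (\<lambda>n. sinhc_sqrt_coeff n * z^n)"
  unfolding sinhc_sqrt_coeff_def by (rule summable_inverse_fact_reindex) simp

lemma cosh_sqrt_has_derivative: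
    "(cosh_sqrt has_field_derivative (\<Sum>n. diffs cosh_sqrt_coeff n * z^n)) (at z)"
  unfolding cosh_sqrt_def[abs_def] by (rule termdiffs_strong_converges_everywhere[OF summable_cosh_sqrt])

lemma sinhc_sqrt_has_derivative:
    "(sinhc_sqrt has_field_derivative (\<Sum>n. diffs sinhc_sqrt_coeff n * z^n)) (at z)"
  unfolding sinhc_sqrt_def[abs_def] by (rule termdiffs_strong_converges_everywhere[OF summable_sinhc_sqrt])

lemma cosh_sqrt_0: "cosh_sqrt 0 = 1" unfolding cosh_sqrt_def using powser_zero[of cosh_sqrt_coeff]
    by (simp add: cosh_sqrt_coeff_def)
lemma sinhc_sqrt_0: "sinhc_sqrt 0 = 1" unfolding sinhc_sqrt_def using
    powser_zero[of sinhc_sqrt_coeff] by (simp add: sinhc_sqrt_coeff_def)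

lemma cosh_sqrt_has_derivative_0: "(cosh_sqrt has_field_derivative 1/2) (at 0)"
proof -
  have "(\<Sum>n. diffs cosh_sqrt_coeff n * (0::complex)^n) = diffs cosh_sqrt_coeff 0" by (rule powser_zero)
  also have "\<dots> = 1/2" by (simp add: diffs_def cosh_sqrt_coeff_def)
  finally have eq: "(\<Sum>n. diffs cosh_sqrt_coeff n * (0::complex)^n) = 1/2" .
  show ?thesis using cosh_sqrt_has_derivative[of 0] unfolding eq .
qed

lemma sinhc_sqrt_has_derivative_0: "(sinhc_sqrt has_field_derivative 1/6) (at 0)"
proof -
  have "(\<Sum>n. diffs sinhc_sqrt_coeff n * (0::complex)^n) = diffs sinhc_sqrt_coeff 0" by (rule powser_zero)
  also have "\<dots> = 1/6" by (simp add: diffs_def sinhc_sqrt_coeff_def fact_numeral)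
  finally have eq: "(\<Sum>n. diffs sinhc_sqrt_coeff n * (0::complex)^n) = 1/6" .
  show ?thesis using sinhc_sqrt_has_derivative[of 0] unfolding eq .
qed

lemma holomorphic_cosh_sqrt: "cosh_sqrt holomorphic_on A"
  using cosh_sqrt_has_derivative holomorphic_on_def field_differentiable_def
      field_differentiable_at_within by blast
lemma holomorphic_sinhc_sqrt: "sinhc_sqrt holomorphic_on A"
  using sinhc_sqrt_has_derivative holomorphic_on_def field_differentiable_def
      field_differentiable_at_within by blast

lemma cosh_csqrt_eq: "cosh (csqrt z) = cosh_sqrt z"
proof -
  let ?x = "csqrt z"
  have "(\<lambda>n. if even n then ?x ^ n /\<^sub>R fact n else 0) sums cosh ?x" by (rule cosh_converges)
  then have "(\<lambda>n. (\<lambda>n. if even n then ?x ^ n /\<^sub>R fact n else 0) (2*n)) sums cosh ?x"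
    by (subst sums_mono_reindex) (auto simp: strict_mono_def elim!: evenE)
  then have "(\<lambda>n. ?x ^ (2*n) /\<^sub>R fact (2*n)) sums cosh ?x" by simp
  moreover have "?x ^ (2*n) /\<^sub>R fact (2*n) = cosh_sqrt_coeff n * z^n" for n
  proof -
    have "?x ^ (2*n) = z^n" by (simp only: power_mult power2_csqrt)
    then show ?thesis by (simp add: cosh_sqrt_coeff_def scaleR_conv_of_real divide_inverse mult.commute)
  qed
  ultimately have "(\<lambda>n. cosh_sqrt_coeff n * z^n) sums cosh ?x" by simp
  then show ?thesis unfolding cosh_sqrt_def by (simp add: sums_iff)
qed

lemma sinh_csqrt_div_eq: assumes "z \<noteq> 0" shows "sinh (csqrt z) / csqrt z = sinhc_sqrt z"
proof -
  let ?x = "csqrt z"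
  have x0: "?x \<noteq> 0" using assms by simp
  have "(\<lambda>n. if even n then 0 else ?x ^ n /\<^sub>R fact n) sums sinh ?x" by (rule sinh_converges)
  then have "(\<lambda>n. (\<lambda>n. if even n then 0 else ?x ^ n /\<^sub>R fact n) (2*n+1)) sums sinh ?x"
    by (subst sums_mono_reindex) (auto simp: strict_mono_def elim!: oddE)
  then have "(\<lambda>n. ?x ^ (2*n+1) /\<^sub>R fact (2*n+1)) sums sinh ?x" by simp
  then have "(\<lambda>n. ?x ^ (2*n+1) /\<^sub>R fact (2*n+1) / ?x) sums (sinh ?x / ?x)"
    by (rule sums_divide)
  moreover have "?x ^ (2*n+1) /\<^sub>R fact (2*n+1) / ?x = sinhc_sqrt_coeff n * z^n" for n
  proof -
    have "?x ^ (2*n+1) / ?x = z^n" using x0 by (simp only: power_add power_mult power2_csqrt) simp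
    then show ?thesis by (simp add: sinhc_sqrt_coeff_def scaleR_conv_of_real divide_inverse
        mult.commute mult.left_commute)
  qed
  ultimately have "(\<lambda>n. sinhc_sqrt_coeff n * z^n) sums (sinh ?x / ?x)" by simp
  then show ?thesis unfolding sinhc_sqrt_def by (simp add: sums_iff)
qed

definition A_sqrt :: "nat \<Rightarrow> nat \<Rightarrow> complex \<Rightarrow> complex" where
    "A_sqrt n k1 z = Afun n k1 (csqrt z)"
definition B_sqrt :: "complex \<Rightarrow> complex" where "B_sqrt z = Bfun (csqrt z)"

lemma A_sqrt_eq: "A_sqrt n k1 = (\<lambda>z. inverse (sinhc_sqrt z) ^ (n+k1) * cosh_sqrt z ^ k1)"
proof
  fix z
  show "A_sqrt n k1 z = inverse (sinhc_sqrt z) ^ (n+k1) * cosh_sqrt z ^ k1"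
  proof (cases "z = 0")
    case True then show ?thesis by (simp add: A_sqrt_def Afun_def sinhc_sqrt_0 cosh_sqrt_0)
  next
    case False
    have "csqrt z / sinh (csqrt z) = inverse (sinh (csqrt z) / csqrt z)" by simp
    then show ?thesis using False
      by (simp add: A_sqrt_def Afun_def sinh_csqrt_div_eq cosh_csqrt_eq)
  qed
qed

lemma B_sqrt_eq: "B_sqrt = (\<lambda>z. cosh_sqrt z / sinhc_sqrt z)"
proof
  fix z
  show "B_sqrt z = cosh_sqrt z / sinhc_sqrt z"
  proof (cases "z = 0")
    case True then show ?thesis by (simp add: B_sqrt_def Bfun_def sinhc_sqrt_0 cosh_sqrt_0)
  next
    case False
    have "csqrt z * (cosh (csqrt z) / sinh (csqrt z)) = cosh (csqrt z) / (sinh (csqrt z) / csqrt z)"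
      by simp
    then show ?thesis using False
      by (simp add: B_sqrt_def Bfun_def sinh_csqrt_div_eq cosh_csqrt_eq)
  qed
qed

lemma sinhc_sqrt_nonzero: assumes "norm z < 1" shows "sinhc_sqrt z \<noteq> 0"
proof (cases "z = 0")
  case True then show ?thesis by (simp add: sinhc_sqrt_0)
next
  case False
  let ?x = "csqrt z"
  have x0: "?x \<noteq> 0" using False by simp
  have nx: "norm ?x < 1" using real_sqrt_less_mono[OF assms] by simp
  have "sinh ?x \<noteq> 0"
  proof
    assume "sinh ?x = 0"
    then have "exp ?x = exp (- ?x)" by (simp add: sinh_def)
    then have "exp (2 * ?x) = 1"
      by (metis exp_minus_inverse exp_not_eq_zero mult_2 exp_add right_inverse)
    then obtain n :: int where r: "Re (2 * ?x) = 0" and i: "Im (2 * ?x) = of_int (2*n) * pi"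
      by (auto simp: exp_eq_1)
    have "\<bar>Im ?x\<bar> < 1" using nx abs_Im_le_cmod[of ?x] by linarith
    then have "\<bar>of_int n * pi\<bar> < 1" using i by simp
    then have lt: "\<bar>real_of_int n\<bar> * pi < 1" by (simp add: abs_mult)
    have "n = 0"
    proof (rule ccontr)
      assume "n \<noteq> 0"
      then have "1 \<le> \<bar>real_of_int n\<bar>" by linarith
      then have "1 * pi \<le> \<bar>real_of_int n\<bar> * pi" by (intro mult_right_mono) auto
      then show False using lt pi_gt3 by linarith
    qed
    then have "?x = 0" using r i by (simp add: complex_eq_iff)
    then show False using x0 by simp
  qed
  then show ?thesis using sinh_csqrt_div_eq[OF False] x0 by auto
qed

lemma holomorphic_A_sqrt: "A_sqrt n k1 holomorphic_on ball 0 1"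
  unfolding A_sqrt_eq using sinhc_sqrt_nonzero by
      (auto intro!: holomorphic_intros holomorphic_sinhc_sqrt holomorphic_cosh_sqrt)

lemma holomorphic_B_sqrt: "B_sqrt holomorphic_on ball 0 1"
  unfolding B_sqrt_eq using sinhc_sqrt_nonzero by
      (auto intro!: holomorphic_intros holomorphic_sinhc_sqrt holomorphic_cosh_sqrt)

lemma A_sqrt_0: "A_sqrt n k1 0 = 1" by (simp add: A_sqrt_eq sinhc_sqrt_0 cosh_sqrt_0)
lemma deriv_B_sqrt_0: "deriv B_sqrt 0 = 1/3"
proof -
  have "((\<lambda>z. cosh_sqrt z / sinhc_sqrt z) has_field_derivative
      (1/2 * sinhc_sqrt 0 - 1/6 * cosh_sqrt 0) / (sinhc_sqrt 0 ^ 2)) (at 0)"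
    using DERIV_quotient[OF cosh_sqrt_has_derivative_0 sinhc_sqrt_has_derivative_0] sinhc_sqrt_0 by
        (simp add: mult.commute)
  then have "(B_sqrt has_field_derivative 1/3) (at 0)" by (simp add: B_sqrt_eq sinhc_sqrt_0 cosh_sqrt_0)
  then show ?thesis by (rule DERIV_imp_deriv)
qed

(* The functions of the proof are families h y x of functions of x in R^m depending on the
   parameter y. smooth_expr is a syntactic class of such families that is closed under the
   partial derivatives pd, so they can be differentiated any number of times; smooth h only
   asks h to agree with such an expression on near_origin, where all estimates take place. *)
definition near_origin :: "real \<Rightarrow> real^'m::finite \<Rightarrow> bool" where
  "near_origin y x \<longleftrightarrow> \<bar>y\<bar> < 1/4 \<and> norm x < 1/4"

inductive smooth_expr :: "(real \<Rightarrow> real^'m::finite \<Rightarrow> complex) \<Rightarrow> bool" where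
  smooth_expr_coef: "continuous_on {-1/4<..<1/4} c \<Longrightarrow> smooth_expr (\<lambda>y x. c y)"
| smooth_expr_coord: "smooth_expr (\<lambda>y x. of_real (x$k))"
| smooth_expr_add: "smooth_expr f \<Longrightarrow> smooth_expr g \<Longrightarrow> smooth_expr
    (\<lambda>y x. f y x + g y x)"
| smooth_expr_mult: "smooth_expr f \<Longrightarrow> smooth_expr g \<Longrightarrow> smooth_expr
    (\<lambda>y x. f y x * g y x)"
| smooth_expr_comp: "smooth_expr f \<Longrightarrow>
    (\<forall>y x. near_origin y x \<longrightarrow> f y x \<in> ball 0 1) \<Longrightarrow> F
    holomorphic_on ball 0 1
            \<Longrightarrow> smooth_expr (\<lambda>y x. F (f y x))"

definition has_pd_near :: "'m::finite \<Rightarrow>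
    (real \<Rightarrow> real^'m \<Rightarrow> complex) \<Rightarrow>
    (real \<Rightarrow> real^'m \<Rightarrow> complex) \<Rightarrow> bool"
  where "has_pd_near k h h' \<longleftrightarrow> (\<forall>y x. near_origin y x \<longrightarrow>
           ((\<lambda>t. h y (x + t *\<^sub>R axis k 1)) has_vector_derivative h' y x) (at 0))"

lemma has_vector_derivative_coord:
  "((\<lambda>t. complex_of_real ((x + t *\<^sub>R axis a 1) $ k)) has_vector_derivative
      (if k = a then 1 else 0)) (at 0)"
  by (auto intro!: derivative_eq_intros simp: axis_def)

lemma has_pd_near_add:
  "has_pd_near k f f' \<Longrightarrow> has_pd_near k g g'
     \<Longrightarrow> has_pd_near k (\<lambda>y x. f y x + g y x) (\<lambda>y x. f' y x + g' y x)"
  using has_vector_derivative_add unfolding has_pd_near_def by fast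

lemma has_pd_near_mult:
  assumes f: "has_pd_near k f f'" and g: "has_pd_near k g g'"
  shows "has_pd_near k (\<lambda>y x. f y x * g y x) (\<lambda>y x. f y x * g' y x + f' y x * g y x)"
proof -
  have "((\<lambda>t. f y (x + t *\<^sub>R axis k 1) * g y (x + t *\<^sub>R axis k 1)) has_vector_derivative
          f y x * g' y x + f' y x * g y x) (at 0)" if "near_origin y x" for y x
    using has_vector_derivative_mult[OF f[unfolded has_pd_near_def, rule_format, OF that]
        g[unfolded has_pd_near_def, rule_format, OF that]] by simp
  then show ?thesis unfolding has_pd_near_def by blast
qed

lemma has_pd_near_comp:
  assumes f: "has_pd_near k f f'" and ball: "\<forall>y x. near_origin y x \<longrightarrow> f y x
      \<in> ball 0 1"
    and F: "F holomorphic_on ball 0 1"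
  shows "has_pd_near k (\<lambda>y x. F (f y x)) (\<lambda>y x. f' y x * deriv F (f y x))"
proof -
  have "((\<lambda>t. F (f y (x + t *\<^sub>R axis k 1))) has_vector_derivative f' y x * deriv F
      (f y x)) (at 0)"
    if "near_origin y x" for y x
  proof -
    have "f y x \<in> ball 0 1" using ball that by blast
    then have "(F has_field_derivative deriv F (f y x)) (at ((\<lambda>t. f y (x + t *\<^sub>R axis k 1)) 0))"
      using holomorphic_derivI[OF F open_ball] by simp
    from field_vector_diff_chain_at[OF f[unfolded has_pd_near_def, rule_format, OF that] this]
    show ?thesis by (simp add: o_def)
  qed
  then show ?thesis unfolding has_pd_near_def by blast
qed

lemma smooth_expr_partial:
  fixes h :: "real \<Rightarrow> real^'m::finite \<Rightarrow> complex"
  assumes "smooth_expr h"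
  shows "\<exists>h'. smooth_expr h' \<and> has_pd_near k h h'"
  using assms
proof induction
  case (smooth_expr_coef c)
  have "smooth_expr (\<lambda>y x. 0)" by (rule smooth_expr.smooth_expr_coef) simp
  then show ?case by (auto simp: has_pd_near_def)
next
  case (smooth_expr_coord l)
  have "smooth_expr (\<lambda>y x. if l = k then 1 else 0)" by (rule smooth_expr.smooth_expr_coef) simp
  moreover have "has_pd_near k (\<lambda>y x. complex_of_real (x $ l)) (\<lambda>y x. if l = k then 1 else 0)"
    unfolding has_pd_near_def by (intro allI impI has_vector_derivative_coord)
  ultimately show ?case by blast
next
  case (smooth_expr_add f g)
  then obtain f' g' where "smooth_expr f'" "has_pd_near k f f'" "smooth_expr g'" "has_pd_near k g g'"
    by blast
  then show ?case by (blast intro: smooth_expr.smooth_expr_add has_pd_near_add)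
next
  case (smooth_expr_mult f g)
  then obtain f' g' where "smooth_expr f'" "has_pd_near k f f'" "smooth_expr g'" "has_pd_near k g g'"
    by blast
  with smooth_expr_mult.hyps show ?case
    by (blast intro: smooth_expr.smooth_expr_add smooth_expr.smooth_expr_mult has_pd_near_mult)
next
  case (smooth_expr_comp f F)
  then obtain f' where "smooth_expr f'" "has_pd_near k f f'" by blast
  moreover have "smooth_expr (\<lambda>y x. deriv F (f y x))"
    using smooth_expr.smooth_expr_comp[OF smooth_expr_comp.hyps(1,2)
        holomorphic_deriv[OF smooth_expr_comp.hyps(3) open_ball]] .
  ultimately show ?case using smooth_expr_comp.hyps
    by (blast intro: smooth_expr.smooth_expr_mult has_pd_near_comp)
qed

lemma smooth_expr_continuous_on:
  fixes h :: "real \<Rightarrow> real^'m::finite \<Rightarrow> complex"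
  assumes "smooth_expr h" "norm x < 1/4"
  shows "continuous_on {-1/4<..<1/4} (\<lambda>y. h y x)"
  using assms(1)
proof induction
  case (smooth_expr_comp f F)
  have "continuous_on (ball 0 1) F" using smooth_expr_comp holomorphic_on_imp_continuous_on by blast
  moreover have "\<forall>y\<in>{-1/4<..<1/4}. f y x \<in> ball 0 1" using smooth_expr_comp
      assms(2) by (auto simp: near_origin_def)
  moreover have "continuous_on {-1/4<..<1/4} (\<lambda>y. f y x)" by (rule smooth_expr_comp.IH)
  ultimately show ?case by (intro
      continuous_on_compose2[of "ball 0 1" F "{-1/4<..<1/4}" "\<lambda>y. f y x"]) auto
next
  case (smooth_expr_add f g) then show ?case by (intro continuous_on_add)
next
  case (smooth_expr_mult f g) then show ?case by (intro continuous_on_mult)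
qed simp_all

definition smooth :: "(real \<Rightarrow> real^'m::finite \<Rightarrow> complex) \<Rightarrow> bool" where
  "smooth h \<longleftrightarrow>
      (\<exists>h0. smooth_expr h0 \<and>
      (\<forall>y x. near_origin y x \<longrightarrow> h y x = h0 y x))"

lemma smooth_expr_imp_smooth: "smooth_expr h \<Longrightarrow> smooth h" unfolding smooth_def by blast

lemma open_line_near_origin: "open {t::real. norm (x + t *\<^sub>R axis k 1 :: real^'m::finite) < 1/4}"
  by (intro open_Collect_less continuous_intros)

lemma pd_cong:
  fixes h1 h2 :: "real^'m::finite \<Rightarrow> complex"
  assumes "\<And>z. norm z < 1/4 \<Longrightarrow> h1 z = h2 z" "norm x < 1/4"
  shows "pd k h1 x = pd k h2 x"
  unfolding pd_def
proof (rule vector_derivative_cong_eq)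
  have "eventually (\<lambda>t. t \<in> {t::real. norm (x + t *\<^sub>R axis k 1) < 1/4}) (nhds 0)"
    using assms(2) by (intro eventually_nhds_in_open open_line_near_origin) auto
  then show "eventually (\<lambda>t. t \<in> UNIV \<longrightarrow> h1 (x + t *\<^sub>R axis k 1) =
      h2 (x + t *\<^sub>R axis k 1)) (nhds 0)"
    by (rule eventually_mono) (auto simp: assms(1))
qed auto

lemma smooth_has_pd:
  fixes h :: "real \<Rightarrow> real^'m::finite \<Rightarrow> complex"
  assumes "smooth h" "near_origin y x"
  shows "((\<lambda>t. h y (x + t *\<^sub>R axis k 1)) has_vector_derivative pd k (h y) x) (at 0)"
proof -
  obtain h0 where h0: "smooth_expr h0" "\<And>y x. near_origin y x \<Longrightarrow> h y x = h0 y
      x" using assms(1) smooth_def by blast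
  obtain h' where h': "smooth_expr h'" "\<forall>y x. near_origin y x \<longrightarrow>
           ((\<lambda>t. h0 y (x + t *\<^sub>R axis k 1)) has_vector_derivative h' y x) (at 0)"
    using smooth_expr_partial[OF h0(1)] unfolding has_pd_near_def by blast
  have d: "((\<lambda>t. h y (x + t *\<^sub>R axis k 1)) has_vector_derivative h' y x) (at 0)"
  proof (rule has_vector_derivative_transform_within_open[OF h'(2)[rule_format, OF assms(2)]
      open_line_near_origin])
    show "0 \<in> {t. norm (x + t *\<^sub>R axis k 1) < 1/4}" using assms(2) by (simp add: near_origin_def)
    fix t assume "t \<in> {t. norm (x + t *\<^sub>R axis k 1) < 1/4}"
    then show "h0 y (x + t *\<^sub>R axis k 1) = h y (x + t *\<^sub>R axis k 1)"
      using h0(2) assms(2) by (auto simp: near_origin_def)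
  qed
  then have "pd k (h y) x = h' y x" unfolding pd_def by (rule vector_derivative_at)
  then show ?thesis using d by simp
qed

lemma smooth_pd:
  fixes h :: "real \<Rightarrow> real^'m::finite \<Rightarrow> complex"
  assumes "smooth h" shows "smooth (\<lambda>y. pd k (h y))"
proof -
  obtain h0 where h0: "smooth_expr h0" "\<And>y x. near_origin y x \<Longrightarrow> h y x = h0 y
      x" using assms(1) smooth_def by blast
  obtain h' where h': "smooth_expr h'" "\<forall>y x. near_origin y x \<longrightarrow>
           ((\<lambda>t. h0 y (x + t *\<^sub>R axis k 1)) has_vector_derivative h' y x) (at 0)"
    using smooth_expr_partial[OF h0(1)] unfolding has_pd_near_def by blast
  have "pd k (h y) x = h' y x" if "near_origin y x" for y x
  proof -
    have "pd k (h y) x = pd k (h0 y) x"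
      using that h0(2) by (intro pd_cong) (auto simp: near_origin_def)
    also have "\<dots> = h' y x" unfolding pd_def using h'(2) that by (intro vector_derivative_at) auto
    finally show ?thesis .
  qed
  then show ?thesis unfolding smooth_def using h'(1) by blast
qed

lemma smooth_continuous_on:
  fixes h :: "real \<Rightarrow> real^'m::finite \<Rightarrow> complex"
  assumes "smooth h" "norm x < 1/4"
  shows "continuous_on {-1/4<..<1/4} (\<lambda>y. h y x)"
proof -
  obtain h0 where h0: "smooth_expr h0" "\<And>y x. near_origin y x \<Longrightarrow> h y x = h0 y
      x" using assms(1) smooth_def by blast
  have "continuous_on {-1/4<..<1/4} (\<lambda>y. h0 y x)" by
      (rule smooth_expr_continuous_on[OF h0(1) assms(2)])
  then show ?thesis by (rule continuous_on_cong[THEN iffD1, rotated 2])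
      (use h0(2) assms(2) in \<open>auto simp: near_origin_def\<close>)
qed

lemma smooth_coef: "continuous_on {-1/4<..<1/4} c \<Longrightarrow> smooth (\<lambda>y x. c y)"
  by (intro smooth_expr_imp_smooth smooth_expr_coef)
lemma smooth_const: "smooth (\<lambda>y x. c)"
  by (intro smooth_coef continuous_intros)
lemma smooth_coord: "smooth (\<lambda>y x. of_real (x$k))"
  by (intro smooth_expr_imp_smooth smooth_expr_coord)
lemma smooth_add: "smooth f \<Longrightarrow> smooth g \<Longrightarrow> smooth (\<lambda>y x. f y x + g y x)"
  unfolding smooth_def by (auto intro!: smooth_expr_add)
lemma smooth_mult: "smooth f \<Longrightarrow> smooth g \<Longrightarrow> smooth
    (\<lambda>y x. f y x * g y x)"
  unfolding smooth_def by (auto intro!: smooth_expr_mult)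
lemma smooth_comp:
  assumes "smooth f" "\<And>y x. near_origin y x \<Longrightarrow> f y x \<in> ball 0 1" "F
      holomorphic_on ball 0 1"
  shows "smooth (\<lambda>y x. F (f y x))"
proof -
  obtain h0 where h0: "smooth_expr h0" "\<And>y x. near_origin y x \<Longrightarrow> f y x = h0 y
      x" using assms(1) smooth_def by blast
  have "\<forall>y x. near_origin y x \<longrightarrow> h0 y x \<in> ball 0 1" using h0(2) assms(2) by metis
  then have "smooth_expr (\<lambda>y x. F (h0 y x))" by (rule smooth_expr_comp[OF h0(1) _ assms(3)])
  then show ?thesis unfolding smooth_def using h0 by auto
qed
lemma smooth_minus: "smooth f \<Longrightarrow> smooth (\<lambda>y x. - f y x)"
  using smooth_mult[OF smooth_const[of "-1"]] by simp
lemma smooth_diff: "smooth f \<Longrightarrow> smooth g \<Longrightarrow> smooth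
    (\<lambda>y x. f y x - g y x)"
  using smooth_add[OF _ smooth_minus] by simp
lemma smooth_power: "smooth f \<Longrightarrow> smooth (\<lambda>y x. f y x ^ n)"
  by (induction n) (auto intro!: smooth_const smooth_mult)
lemma smooth_sum: "finite A \<Longrightarrow> (\<And>a. a \<in> A \<Longrightarrow> smooth (f a))
    \<Longrightarrow> smooth (\<lambda>y x. \<Sum>a\<in>A. f a y x)"
  by (induction A rule: finite_induct) (auto intro!: smooth_const smooth_add)

lemma pd_eqI: "((\<lambda>t. h (x + t *\<^sub>R axis k 1)) has_vector_derivative d) (at 0)
    \<Longrightarrow> pd k h x = d"
  unfolding pd_def by (rule vector_derivative_at)

lemma pd_add:
  assumes "smooth f" "smooth g" "near_origin y x"
  shows "pd k (\<lambda>x. f y x + g y x) x = pd k (f y) x + pd k (g y) x"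
  by (intro pd_eqI has_vector_derivative_add smooth_has_pd assms)

lemma pd_mult:
  assumes "smooth f" "smooth g" "near_origin y x"
  shows "pd k (\<lambda>x. f y x * g y x) x = f y x * pd k (g y) x + pd k (f y) x * g y x"
  using has_vector_derivative_mult[OF smooth_has_pd[OF assms(1,3)] smooth_has_pd[OF assms(2,3)]]
  by (intro pd_eqI) simp

lemma pd_cmult:
  assumes "smooth f" "near_origin y x"
  shows "pd k (\<lambda>x. c * f y x) x = c * pd k (f y) x"
  by (intro pd_eqI has_vector_derivative_mult_right smooth_has_pd assms)

lemma pd_const: "pd k (\<lambda>x. c) x = 0"
  by (intro pd_eqI) simp

lemma pd_coord: "pd k (\<lambda>x. complex_of_real (x$l)) x = (if l = k then 1 else 0)"
proof (rule pd_eqI)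
  show "((\<lambda>t. complex_of_real ((x + t *\<^sub>R axis k 1) $ l)) has_vector_derivative
     (if l = k then 1 else 0)) (at 0)"
    by (auto intro!: derivative_eq_intros simp: axis_def)
qed

lemma pd_sum:
  assumes "finite A" "\<And>a. a \<in> A \<Longrightarrow> smooth (f a)" "near_origin y x"
  shows "pd k (\<lambda>x. \<Sum>a\<in>A. f a y x) x = (\<Sum>a\<in>A. pd k (f a y) x)"
  by (intro pd_eqI has_vector_derivative_sum smooth_has_pd assms)

lemma pd_comp:
  assumes "smooth f" "\<And>y x. near_origin y x \<Longrightarrow> f y x \<in> ball 0 1" "F
      holomorphic_on ball 0 1" "near_origin y x"
  shows "pd k (\<lambda>x. F (f y x)) x = deriv F (f y x) * pd k (f y) x"
proof (rule pd_eqI)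
  have "(F has_field_derivative deriv F (f y x)) (at (f y x))"
    by (rule holomorphic_derivI[OF assms(3) open_ball assms(2)[OF assms(4)]])
  then have "(F has_field_derivative deriv F (f y x)) (at ((\<lambda>t. f y (x + t *\<^sub>R axis k 1)) 0))"
    by simp
  from field_vector_diff_chain_at[OF smooth_has_pd[OF assms(1,4)] this]
  have "((\<lambda>t. F (f y (x + t *\<^sub>R axis k 1))) has_vector_derivative pd k (f y) x *
      deriv F (f y x)) (at 0)"
    by (simp add: o_def)
  then show "((\<lambda>t. F (f y (x + t *\<^sub>R axis k 1))) has_vector_derivative deriv F
      (f y x) * pd k (f y) x) (at 0)"
    by (simp only: mult.commute)
qed

fun pds :: "'m::finite list \<Rightarrow> (real \<Rightarrow> real^'m \<Rightarrow> complex)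
    \<Rightarrow> real \<Rightarrow> real^'m \<Rightarrow> complex" where
  "pds [] h = h"
| "pds (k#s) h = pds s (\<lambda>y. pd k (h y))"

lemma smooth_pds: "smooth h \<Longrightarrow> smooth (pds s h)"
  by (induction s arbitrary: h) (auto intro: smooth_pd)

lemma pds_append: "pds (s @ t) h = pds t (pds s h)"
  by (induction s arbitrary: h) auto

lemma pds_cong:
  assumes "\<And>y x. near_origin y x \<Longrightarrow> f y x = g y x" "near_origin y x"
  shows "pds s f y x = pds s g y x"
  using assms
proof (induction s arbitrary: f g)
  case Nil then show ?case by simp
next
  case (Cons k s)
  have "pd k (f y) x = pd k (g y) x" if "near_origin y x" for y x
    using Cons.prems(1) that by (intro pd_cong) (auto simp: near_origin_def)
  then show ?case using Cons.IH[of "\<lambda>y. pd k (f y)" "\<lambda>y. pd k (g y)"] Cons.prems(2) by simp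
qed

lemma pds_add:
  assumes "smooth f" "smooth g" "near_origin y x"
  shows "pds s (\<lambda>y x. f y x + g y x) y x = pds s f y x + pds s g y x"
  using assms
proof (induction s arbitrary: f g)
  case Nil then show ?case by simp
next
  case (Cons k s)
  have "pds (k#s) (\<lambda>y x. f y x + g y x) y x = pds s (\<lambda>y x. pd k (f y) x + pd k (g y) x) y x"
    using Cons.prems by (simp only: pds.simps) (rule pds_cong[OF pd_add])
  also have "\<dots> = pds s (\<lambda>y. pd k (f y)) y x + pds s (\<lambda>y. pd k (g y)) y x"
    using Cons.prems by (intro Cons.IH smooth_pd)
  finally show ?case by simp
qed

lemma pds_cmult:
  assumes "smooth f" "near_origin y x"
  shows "pds s (\<lambda>y x. c y * f y x) y x = c y * pds s f y x"
  using assms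
proof (induction s arbitrary: f)
  case Nil then show ?case by simp
next
  case (Cons k s)
  have "pds (k#s) (\<lambda>y x. c y * f y x) y x = pds s (\<lambda>y x. c y * pd k (f y) x) y x"
    using Cons.prems by (simp only: pds.simps) (rule pds_cong[OF pd_cmult])
  also have "\<dots> = c y * pds s (\<lambda>y. pd k (f y)) y x"
    using Cons.prems by (intro Cons.IH smooth_pd)
  finally show ?case by simp
qed

lemma pd_zero: "pd k (\<lambda>x. 0) = (\<lambda>x. 0)"
  using pd_const[of k 0] by auto

lemma pds_zero: "pds s (\<lambda>y x. 0) = (\<lambda>y x. 0)"
  by (induction s) (simp_all add: pd_zero)

lemma pds_Cons_coef: "pds (k#s) (\<lambda>y x. c y) = (\<lambda>y x. 0)"
proof -
  have "(\<lambda>y. pd k (\<lambda>x. c y)) = (\<lambda>y x. 0)" by (simp add: pd_const fun_eq_iff)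
  then show ?thesis by (simp add: pds_zero)
qed

lemma pds_sum:
  assumes "finite A" "\<And>a. a \<in> A \<Longrightarrow> smooth (f a)" "near_origin y x"
  shows "pds s (\<lambda>y x. \<Sum>a\<in>A. f a y x) y x = (\<Sum>a\<in>A. pds s (f a) y x)"
  using assms
proof (induction A rule: finite_induct)
  case empty then show ?case by (simp add: pds_zero)
next
  case (insert a A)
  have "pds s (\<lambda>y x. \<Sum>a\<in>insert a A. f a y x) y x = pds s
      (\<lambda>y x. f a y x + (\<Sum>a\<in>A. f a y x)) y x"
    using insert.hyps by simp
  also have "\<dots> = pds s (f a) y x + pds s (\<lambda>y x. \<Sum>a\<in>A. f a y x) y x"
    using insert by (intro pds_add smooth_sum) auto
  also have "\<dots> = pds s (f a) y x + (\<Sum>a\<in>A. pds s (f a) y x)"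
    using insert by simp
  finally show ?case using insert.hyps by simp
qed

(* Vanishing to order r at (y, x) = (0, 0) with x and y of weight one: every x-derivative
   of order |s| at x = 0 is O(y^(r - |s|)). *)
definition order_ge :: "(real \<Rightarrow> real^'m::finite \<Rightarrow> complex) \<Rightarrow>
    nat \<Rightarrow> bool" where
  "order_ge h r \<longleftrightarrow> smooth h \<and>
      (\<forall>s. (\<lambda>y. pds s h y 0) \<in>
      O[at_right 0](\<lambda>y. complex_of_real y ^ (r - length s)))"

lemma bigo_power_mono: "b \<le> a \<Longrightarrow> (\<lambda>y. complex_of_real y ^ a) \<in>
    O[at_right 0](\<lambda>y. complex_of_real y ^ b)"
proof (rule bigoI[of _ "1::real"])
  assume ab: "b \<le> a"
  show "eventually (\<lambda>y. norm (complex_of_real y ^ a) \<le> 1 * norm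
      (complex_of_real y ^ b)) (at_right 0)"
    using eventually_at_right_real[OF zero_less_one]
  proof (rule eventually_mono)
    fix y :: real assume "y \<in> {0<..<1}"
    then show "norm (complex_of_real y ^ a) \<le> 1 * norm (complex_of_real y ^ b)"
      using ab by (simp add: norm_power power_decreasing)
  qed
qed

lemma eventually_near_origin_0: "eventually (\<lambda>y. near_origin y (0::real^'m::finite)) (at_right 0)"
  using eventually_at_right_real[of 0 "1/4"] by (rule eventually_mono) (auto simp: near_origin_def)

lemma continuous_on_bigo_1:
  assumes "continuous_on {-1/4<..<1/4} (g :: real \<Rightarrow> complex)"
  shows "g \<in> O[at_right 0](\<lambda>y. 1)"
proof (rule bigoI_tendsto[where c = "g 0"])
  have "isCont g 0" using assms by (rule continuous_on_interior) auto
  then have "(g \<longlongrightarrow> g 0) (at_right 0)" by (simp add: isCont_def filterlim_at_split)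
  then show "((\<lambda>x. g x / 1) \<longlongrightarrow> g 0) (at_right 0)" by simp
qed simp

lemma smooth_order_ge_0: "smooth h \<Longrightarrow> order_ge h 0"
  unfolding order_ge_def by (auto intro!: continuous_on_bigo_1 smooth_continuous_on smooth_pds)

lemma order_ge_pd: "order_ge f r \<Longrightarrow> order_ge (\<lambda>y. pd k (f y)) (r - 1)"
proof -
  assume o: "order_ge f r"
  then have "(\<lambda>y. pds (k#s) f y 0) \<in>
      O[at_right 0](\<lambda>y. complex_of_real y ^ (r - length (k#s)))" for s
    unfolding order_ge_def by blast
  moreover have "r - length (k#s) = (r - 1) - length s" for s by simp
  ultimately show ?thesis using o smooth_pd unfolding order_ge_def by auto
qed

lemma pds_mult_eq:
  assumes "smooth f" "smooth g" "near_origin y x"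
  shows "pds (k#s) (\<lambda>y x. f y x * g y x) y x
       = pds s (\<lambda>y x. f y x * pd k (g y) x) y x + pds s (\<lambda>y x. pd k (f y) x * g y x) y x"
proof -
  have "pds (k#s) (\<lambda>y x. f y x * g y x) y x
      = pds s (\<lambda>y x. f y x * pd k (g y) x + pd k (f y) x * g y x) y x"
    using assms by (simp only: pds.simps) (rule pds_cong[OF pd_mult])
  also have "\<dots> = pds s (\<lambda>y x. f y x * pd k (g y) x) y x + pds s
      (\<lambda>y x. pd k (f y) x * g y x) y x"
    using assms by (intro pds_add smooth_mult smooth_pd)
  finally show ?thesis .
qed

lemma pds_mult_bigo:
  fixes f g :: "real \<Rightarrow> real^'m::finite \<Rightarrow> complex"
  assumes "order_ge f r1" "order_ge g r2"
  shows "(\<lambda>y. pds s (\<lambda>y x. f y x * g y x) y 0) \<in>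
      O[at_right 0](\<lambda>y. complex_of_real y ^ (r1 + r2 - length s))"
  using assms
proof (induction s arbitrary: f g r1 r2)
  case Nil
  have "(\<lambda>y. f y 0) \<in> O[at_right 0](\<lambda>y. complex_of_real y ^ r1)"
       "(\<lambda>y. g y 0) \<in> O[at_right 0](\<lambda>y. complex_of_real y ^ r2)"
    using Nil.prems unfolding order_ge_def by (metis pds.simps(1) list.size(3) diff_zero)+
  from landau_o.big_mult[OF this] show ?case by (simp add: power_add)
next
  case (Cons k s)
  have "(\<lambda>y. pds s (\<lambda>y x. f y x * pd k (g y) x) y 0)
      \<in> O[at_right 0](\<lambda>y. complex_of_real y ^ (r1 + (r2 - 1) - length s))"
    using Cons.IH Cons.prems order_ge_pd by blast
  then have 1: "(\<lambda>y. pds s (\<lambda>y x. f y x * pd k (g y) x) y 0)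
      \<in> O[at_right 0](\<lambda>y. complex_of_real y ^ (r1 + r2 - length (k#s)))"
    by (rule landau_o.big.trans[OF _ bigo_power_mono]) simp
  have "(\<lambda>y. pds s (\<lambda>y x. pd k (f y) x * g y x) y 0)
      \<in> O[at_right 0](\<lambda>y. complex_of_real y ^ ((r1 - 1) + r2 - length s))"
    using Cons.IH Cons.prems order_ge_pd by blast
  then have 2: "(\<lambda>y. pds s (\<lambda>y x. pd k (f y) x * g y x) y 0)
      \<in> O[at_right 0](\<lambda>y. complex_of_real y ^ (r1 + r2 - length (k#s)))"
    by (rule landau_o.big.trans[OF _ bigo_power_mono]) simp
  have "(\<lambda>y. pds s (\<lambda>y x. f y x * pd k (g y) x) y 0 + pds s
      (\<lambda>y x. pd k (f y) x * g y x) y 0)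
      \<in> O[at_right 0](\<lambda>y. complex_of_real y ^ (r1 + r2 - length (k#s)))"
    by (rule sum_in_bigo(1)[OF 1 2])
  moreover have ev: "eventually (\<lambda>y. pds (k#s) (\<lambda>y x. f y x * g y x) y 0
      = pds s (\<lambda>y x. f y x * pd k (g y) x) y 0 + pds s (\<lambda>y x. pd k (f y) x * g y x)
          y 0) (at_right 0)"
    using eventually_near_origin_0
  proof (rule eventually_mono)
    show "pds (k#s) (\<lambda>y x. f y x * g y x) y 0
      = pds s (\<lambda>y x. f y x * pd k (g y) x) y 0 + pds s (\<lambda>y x. pd k (f y) x * g y x) y 0"
      if "near_origin y (0::real^'m)" for y
      using Cons.prems that by (intro pds_mult_eq) (auto simp: order_ge_def)
  qed
  ultimately show ?case using landau_o.big.in_cong[OF ev] by simp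
qed

lemma order_ge_mult:
  assumes "order_ge f r1" "order_ge g r2" shows "order_ge (\<lambda>y x. f y x * g y x) (r1 + r2)"
proof -
  have "smooth (\<lambda>y x. f y x * g y x)" using assms by (intro smooth_mult) (auto simp: order_ge_def)
  then show ?thesis unfolding order_ge_def using pds_mult_bigo[OF assms] by blast
qed

lemma order_ge_power: "order_ge f r \<Longrightarrow> order_ge (\<lambda>y x. f y x ^ n) (n * r)"
proof (induction n)
  case 0 then show ?case by (simp add: smooth_order_ge_0 smooth_const)
next
  case (Suc n)
  then have "order_ge (\<lambda>y x. f y x * f y x ^ n) (r + n * r)" by (intro order_ge_mult)
  then show ?case by simp
qed

(* (Dop M)^r expands into a sum over lists of r index pairs: entry_prod collects the
   matrix entries and pair_word the order of the corresponding partial derivatives. *)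
definition entry_prod :: "complex^'m^'m \<Rightarrow> ('m \<times> 'm) list \<Rightarrow> complex" where
  "entry_prod M ps = (\<Prod>p\<leftarrow>ps. M $ fst p $ snd p)"
definition pair_word :: "('m \<times> 'm) list \<Rightarrow> 'm list" where
  "pair_word ps = concat (map (\<lambda>p. [snd p, fst p]) ps)"
definition pair_lists :: "nat \<Rightarrow> ('m::finite \<times> 'm) list set" where
  "pair_lists r = {ps. set ps \<subseteq> UNIV \<and> length ps = r}"

lemma finite_pair_lists: "finite (pair_lists r)"
  unfolding pair_lists_def by (rule finite_lists_length_eq) simp

lemma pair_lists_0: "pair_lists 0 = {[]}" by (auto simp: pair_lists_def)

lemma length_pair_word: "length (pair_word ps) = 2 * length ps"
  by (induction ps) (auto simp: pair_word_def)

lemma Dop_eq_pds: "Dop M (h y) = (\<lambda>x. \<Sum>k\<in>UNIV. \<Sum>l\<in>UNIV. M$k$l * pds [l,k] h y x)"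
  by (simp add: Dop_def fun_eq_iff)

lemma sum_pair_lists_Suc:
  "(\<Sum>ps\<in>pair_lists (Suc r). F ps) = (\<Sum>ps\<in>pair_lists r. \<Sum>p\<in>UNIV. F (p # ps))"
proof -
  have "(\<lambda>(xs, p). p # xs) ` (pair_lists r \<times> UNIV) = pair_lists (Suc r)"
    unfolding pair_lists_def by (rule lists_length_Suc_eq[symmetric])
  then have "(\<Sum>ps\<in>pair_lists (Suc r). F ps) =
      (\<Sum>ps\<in>(\<lambda>(xs, p). p # xs) ` (pair_lists r \<times> UNIV). F ps)"
    by (rule arg_cong[symmetric])
  also have "\<dots> = (\<Sum>q\<in>pair_lists r \<times> UNIV. F (snd q # fst q))"
    by (subst sum.reindex) (auto simp: inj_on_def case_prod_beta)
  also have "\<dots> = (\<Sum>ps\<in>pair_lists r. \<Sum>p\<in>UNIV. F (p # ps))"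
    by (simp add: sum.cartesian_product case_prod_beta)
  finally show ?thesis .
qed

lemma pds_Dop_eq:
  fixes h :: "real \<Rightarrow> real^'m::finite \<Rightarrow> complex"
  assumes h: "smooth h" and yx: "near_origin y x"
  shows "pds s (\<lambda>y x. \<Sum>k\<in>UNIV. \<Sum>l\<in>UNIV. M$k$l * pds [l,k] h y x) y x
       = (\<Sum>k\<in>UNIV. \<Sum>l\<in>UNIV. M$k$l * pds ([l,k] @ s) h y x)"
proof -
  have smooth_term: "smooth (\<lambda>y x. M$k$l * pds [l,k] h y x)" for k l
    by (intro smooth_mult smooth_const smooth_pds h)
  have "pds s (\<lambda>y x. \<Sum>k\<in>UNIV. \<Sum>l\<in>UNIV. M$k$l * pds [l,k] h y x) y x
      = (\<Sum>k\<in>UNIV. \<Sum>l\<in>UNIV. pds s (\<lambda>y x. M$k$l * pds [l,k] h y x) y x)"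
    using smooth_term yx by (simp add: pds_sum smooth_sum)
  also have "\<dots> = (\<Sum>k\<in>UNIV. \<Sum>l\<in>UNIV. M$k$l * pds s (pds [l,k] h) y x)"
    by (intro sum.cong[OF refl] pds_cmult[where c = "\<lambda>_. M$k$l" for k l, simplified] smooth_pds h yx)
  finally show ?thesis by (simp add: pds_append)
qed

lemma Dop_funpow_eq:
  fixes h :: "real \<Rightarrow> real^'m::finite \<Rightarrow> complex"
  assumes "smooth h" "near_origin y x"
  shows "(Dop M ^^ r) (h y) x = (\<Sum>ps\<in>pair_lists r. entry_prod M ps * pds (pair_word ps) h y x)"
  using assms
proof (induction r arbitrary: h)
  case 0
  then show ?case by (simp add: pair_lists_0 entry_prod_def pair_word_def)
next
  case (Suc r)
  define h' where "h' = (\<lambda>y x. \<Sum>k\<in>UNIV. \<Sum>l\<in>UNIV. M$k$l * pds [l,k] h y x)"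
  have "smooth h'" unfolding h'_def
    by (intro smooth_sum smooth_mult smooth_const smooth_pds Suc.prems) auto
  have "(Dop M ^^ Suc r) (h y) x = (Dop M ^^ r) (h' y) x"
    by (simp only: funpow_Suc_right o_apply Dop_eq_pds h'_def)
  also have "\<dots> = (\<Sum>ps\<in>pair_lists r. entry_prod M ps * pds (pair_word ps) h' y x)"
    by (rule Suc.IH[OF \<open>smooth h'\<close> Suc.prems(2)])
  also have "\<dots> = (\<Sum>ps\<in>pair_lists r. \<Sum>p\<in>UNIV. entry_prod M (p#ps) * pds
      (pair_word (p#ps)) h y x)"
    unfolding h'_def pds_Dop_eq[OF Suc.prems]
    by (simp add: entry_prod_def pair_word_def sum_distrib_left sum.cartesian_product
        UNIV_Times_UNIV[symmetric] case_prod_beta mult_ac del: UNIV_Times_UNIV)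
  also have "\<dots> = (\<Sum>ps\<in>pair_lists (Suc r). entry_prod M ps * pds (pair_word ps) h y x)"
    by (rule sum_pair_lists_Suc[symmetric])
  finally show ?case .
qed

(* shifted i y x = x + i y u_1 is the point at which a and phi are evaluated; lambda^2
   becomes shifted_sq i y x. *)
definition shifted :: "'m::finite \<Rightarrow> real \<Rightarrow> real^'m \<Rightarrow> complex^'m" where
  "shifted i y x = cvec x + axis i (\<i> * complex_of_real y)"
definition shift_coord :: "'m::finite \<Rightarrow> 'm \<Rightarrow> real \<Rightarrow> complex" where
  "shift_coord i k y = (if k = i then \<i> * complex_of_real y else 0)"
definition shifted_coord :: "'m::finite \<Rightarrow> 'm \<Rightarrow> real \<Rightarrow> real^'m
    \<Rightarrow> complex" where
  "shifted_coord i k y x = complex_of_real (x$k) + shift_coord i k y"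
definition shifted_sq :: "'m::finite \<Rightarrow> real \<Rightarrow> real^'m \<Rightarrow> complex" where
  "shifted_sq i y x = (\<Sum>k\<in>UNIV. shifted_coord i k y x * shifted_coord i k y x)"

lemma shifted_nth: "shifted i y x $ k = shifted_coord i k y x"
  by (simp add: shifted_def cvec_def axis_def shifted_coord_def shift_coord_def)

lemma csq_shifted: "csq (shifted i y x) = shifted_sq i y x"
  by (simp add: csq_def cbil_def shifted_sq_def shifted_nth)

lemma cbil_shifted_axis: "cbil (shifted i y x) (axis i 1) = shifted_coord i i y x"
proof -
  have "cbil (shifted i y x) (axis i 1) = (\<Sum>k\<in>UNIV. shifted i y x $ k * (if k = i then 1 else 0))"
    by (simp add: cbil_def axis_def)
  also have "\<dots> = shifted i y x $ i" by (simp add: if_distrib cong: if_cong)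
  finally show ?thesis by (simp add: shifted_nth)
qed

lemma shifted_coord_self: "shifted_coord i i y x = complex_of_real (x$i) + \<i> * complex_of_real y"
  by (simp add: shifted_coord_def shift_coord_def)

lemma shifted_sq_0: "shifted_sq i y 0 = - ((complex_of_real y)^2)"
proof -
  have "shifted_sq i y 0 = (\<Sum>k\<in>UNIV. shift_coord i k y * shift_coord i k y)" by
      (simp add: shifted_sq_def shifted_coord_def)
  also have "\<dots> = (\<Sum>k\<in>UNIV. if k = i then (\<i> * complex_of_real y)^2 else 0)"
    by (intro sum.cong) (auto simp: shift_coord_def power2_eq_square)
  also have "\<dots> = - ((complex_of_real y)^2)" by (simp add: power_mult_distrib)
  finally show ?thesis .
qed

lemma continuous_on_shift_coord: "continuous_on A (shift_coord i k)"
  unfolding shift_coord_def[abs_def] by (cases "k = i") (auto intro!: continuous_intros)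

lemma smooth_shifted_coord: "smooth (shifted_coord i k)"
  unfolding shifted_coord_def[abs_def] by
      (intro smooth_add smooth_coord smooth_coef continuous_on_shift_coord)

lemma smooth_shifted_sq: "smooth (shifted_sq i)"
  unfolding shifted_sq_def[abs_def] by (intro smooth_sum smooth_mult smooth_shifted_coord) auto

lemma norm_cvec: "norm (cvec x) = norm x"
  by (simp add: norm_vec_def cvec_def)

lemma norm_axis: "norm (axis i (c::complex)) = norm c"
proof -
  have e: "(norm (axis i c $ k))^2 = (if k = i then (norm c)^2 else 0)" for k
    by (simp add: axis_def)
  have "norm (axis i c) = sqrt (\<Sum>k\<in>UNIV. (norm (axis i c $ k))^2)"
    by (simp add: norm_vec_def L2_set_def)
  also have "\<dots> = sqrt ((norm c)^2)" by (simp only: e sum.delta) simp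
  finally show ?thesis by simp
qed

lemma norm_csq: "norm (csq (v::complex^'m::finite)) \<le> (norm v)^2"
proof -
  have "norm (csq v) \<le> (\<Sum>k\<in>UNIV. norm (v$k * v$k))"
    unfolding csq_def cbil_def by (rule norm_sum)
  also have "\<dots> = (\<Sum>k\<in>UNIV. (norm (v$k))^2)" by (simp add: norm_mult power2_eq_square)
  also have "\<dots> = (norm v)^2"
    by (simp add: norm_vec_def L2_set_def sum_nonneg)
  finally show ?thesis .
qed

lemma shifted_sq_in_ball: assumes "near_origin y x" shows "shifted_sq i y x \<in> ball 0 1"
proof -
  have "norm (shifted i y x) \<le> norm x + \<bar>y\<bar>"
    unfolding shifted_def using norm_triangle_ineq[of "cvec x" "axis i (\<i> * complex_of_real y)"]
    by (simp add: norm_cvec norm_axis norm_mult)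
  also have "\<dots> < 1/2" using assms by (simp add: near_origin_def)
  finally have n: "norm (shifted i y x) < 1/2" .
  have "norm (shifted_sq i y x) \<le> (norm (shifted i y x))^2" using norm_csq csq_shifted by metis
  also have "\<dots> \<le> (1/2)^2" using n by (intro power_mono) auto
  finally show ?thesis by (simp add: dist_norm power2_eq_square)
qed

lemma pd_shifted_coord: "pd l (shifted_coord i k y) x = (if k = l then 1 else 0)"
proof -
  have "pd l (shifted_coord i k y) x = pd l (\<lambda>x. complex_of_real (x$k) + shift_coord i k y) x"
    by (simp add: shifted_coord_def[abs_def])
  also have "\<dots> = (if k = l then 1 else 0)"
    by (rule pd_eqI) (auto intro!: derivative_eq_intros simp: axis_def)
  finally show ?thesis .
qed

lemma pd_shifted_sq: assumes "near_origin y x" shows "pd l (shifted_sq i y) x = 2 * shifted_coord i l y x"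
proof -
  have "pd l (shifted_sq i y) x = pd l
      (\<lambda>x. \<Sum>k\<in>UNIV. shifted_coord i k y x * shifted_coord i k y x) x"
    by (simp add: shifted_sq_def[abs_def])
  also have "\<dots> = (\<Sum>k\<in>UNIV. pd l (\<lambda>x. shifted_coord i k y x * shifted_coord i k y x) x)"
    by (rule pd_sum) (auto intro!: smooth_mult smooth_shifted_coord assms)
  also have "\<dots> = (\<Sum>k\<in>UNIV. shifted_coord i k y x * pd l (shifted_coord i k y) x + pd
      l (shifted_coord i k y) x * shifted_coord i k y x)"
    by (intro sum.cong refl pd_mult smooth_shifted_coord assms)
  also have "\<dots> = (\<Sum>k\<in>UNIV. if k = l then 2 * shifted_coord i k y x else 0)"
    by (intro sum.cong refl) (simp add: pd_shifted_coord)
  also have "\<dots> = 2 * shifted_coord i l y x" by simp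
  finally show ?thesis .
qed

lemma smooth_shifted_coord_power: "smooth (\<lambda>y x. c * shifted_coord i i y x ^ m)"
  by (intro smooth_mult smooth_const smooth_power smooth_shifted_coord)

lemma pd_shifted_coord_power: assumes "near_origin y x"
  shows "pd a (\<lambda>x. c * shifted_coord i i y x ^ m) x =
      (if a = i then c * of_nat m * shifted_coord i i y x ^ (m - 1) else 0)"
proof -
  have pw: "pd a (\<lambda>x. shifted_coord i i y x ^ m) x =
      (if a = i then of_nat m * shifted_coord i i y x ^ (m - 1) else 0)" for m
  proof (induction m)
    case 0 then show ?case using pd_const[of a 1 x] by simp
  next
    case (Suc m)
    have "pd a (\<lambda>x. shifted_coord i i y x ^ Suc m) x = pd a
        (\<lambda>x. shifted_coord i i y x * shifted_coord i i y x ^ m) x" by simp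
    also have "\<dots> = shifted_coord i i y x * pd a (\<lambda>x. shifted_coord i i y x ^ m) x +
        pd a (shifted_coord i i y) x * shifted_coord i i y x ^ m"
      by (rule pd_mult[OF smooth_shifted_coord smooth_power[OF smooth_shifted_coord] assms])
    also have "\<dots> = (if a = i then of_nat (Suc m) * shifted_coord i i y x ^ (Suc m - 1) else 0)"
      using Suc by (cases m) (auto simp: pd_shifted_coord algebra_simps)
    finally show ?case .
  qed
  have "pd a (\<lambda>x. c * shifted_coord i i y x ^ m) x = c * pd a
      (\<lambda>x. shifted_coord i i y x ^ m) x"
    by (rule pd_cmult[OF smooth_power[OF smooth_shifted_coord] assms])
  then show ?thesis using pw by simp
qed

lemma pds_shifted_coord_power: assumes "near_origin y x"
  shows "pds s (\<lambda>y x. c * shifted_coord i i y x ^ m) y x =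
    (if set s \<subseteq> {i} then c * (\<Prod>j<length s. of_nat (m - j)) * shifted_coord i i y x
        ^ (m - length s) else 0)"
  using assms
proof (induction s arbitrary: c m)
  case Nil then show ?case by simp
next
  case (Cons a s)
  have "pds (a#s) (\<lambda>y x. c * shifted_coord i i y x ^ m) y x =
      pds s (\<lambda>y x. if a = i then (c * of_nat m) * shifted_coord i i y x ^ (m - 1) else 0) y x"
    by (simp only: pds.simps) (rule pds_cong[OF pd_shifted_coord_power Cons.prems], simp)
  also have "\<dots> = (if set (a#s) \<subseteq> {i} then c *
      (\<Prod>j<length (a#s). of_nat (m - j)) * shifted_coord i i y x ^ (m - length (a#s)) else 0)"
  proof (cases "a = i")
    case True
    have "pds s (\<lambda>y x. (c * of_nat m) * shifted_coord i i y x ^ (m - 1)) y x =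
       (if set s \<subseteq> {i} then (c * of_nat m) * (\<Prod>j<length s. of_nat (m - 1 - j)) *
           shifted_coord i i y x ^ (m - 1 - length s) else 0)"
      by (rule Cons.IH[OF Cons.prems])
    moreover have "(\<Prod>j<length (a#s). (of_nat (m - j) :: complex)) = of_nat m *
        (\<Prod>j<length s. of_nat (m - 1 - j))"
      unfolding length_Cons prod.lessThan_Suc_shift by (simp add: diff_diff_left del: prod.lessThan_Suc)
    ultimately show ?thesis using True by (simp add: mult_ac)
  next
    case False
    then show ?thesis by (simp add: pds_zero)
  qed
  finally show ?case .
qed

lemma pd_diff:
  assumes "smooth f" "smooth g" "near_origin y x"
  shows "pd k (\<lambda>x. f y x - g y x) x = pd k (f y) x - pd k (g y) x"
  by (intro pd_eqI has_vector_derivative_diff smooth_has_pd assms)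

lemma sum_if_outer:
  fixes a :: "'m::finite" and F :: "'n::finite \<Rightarrow> complex"
  shows "(\<Sum>k\<in>UNIV. \<Sum>l\<in>UNIV. (if k = a then F l else 0) * (c l :: complex)) =
      (\<Sum>l\<in>UNIV. F l * c l)"
proof -
  have "\<And>k. (\<Sum>l\<in>UNIV. (if k = a then F l else 0) * c l) =
      (if k = a then (\<Sum>l\<in>UNIV. F l * c l) else 0)"
    by auto
  then show ?thesis by simp
qed

lemma pd_taylor2:
  "pd a (taylor2 g) x = pd a g 0 + (1/2) * ((\<Sum>l\<in>UNIV. pd a (pd l g) 0 * complex_of_real (x$l))
        + (\<Sum>k\<in>UNIV. pd k (pd a g) 0 * complex_of_real (x$k)))"
proof (rule pd_eqI)
  let ?c = "\<lambda>k. complex_of_real ((x + 0 *\<^sub>R axis a 1) $ k)"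
  have "((\<lambda>t. taylor2 g (x + t *\<^sub>R axis a 1)) has_vector_derivative
     (0 + (\<Sum>k\<in>UNIV. pd k g 0 * (if k = a then 1 else 0))
      + (1/2) * (\<Sum>k\<in>UNIV. \<Sum>l\<in>UNIV. pd k (pd l g) 0 * ?c k * (if l = a then 1 else 0)
             + pd k (pd l g) 0 * (if k = a then 1 else 0) * ?c l))) (at 0)"
    unfolding taylor2_def
    by (intro has_vector_derivative_add has_vector_derivative_const has_vector_derivative_sum
        has_vector_derivative_mult_right has_vector_derivative_mult has_vector_derivative_coord)
  moreover have "0 + (\<Sum>k\<in>UNIV. pd k g 0 * (if k = a then 1 else 0))
      + (1/2) * (\<Sum>k\<in>UNIV. \<Sum>l\<in>UNIV. pd k (pd l g) 0 * ?c k * (if l = a then 1 else 0)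
             + pd k (pd l g) 0 * (if k = a then 1 else 0) * ?c l)
     = pd a g 0 + (1/2) * ((\<Sum>l\<in>UNIV. pd a (pd l g) 0 * complex_of_real (x$l))
        + (\<Sum>k\<in>UNIV. pd k (pd a g) 0 * complex_of_real (x$k)))"
    by (simp add: sum.distrib if_distrib[of "\<lambda>z. _ * z"] cong: if_cong)
       (simp add: sum_if_outer)
  ultimately show "((\<lambda>t. taylor2 g (x + t *\<^sub>R axis a 1)) has_vector_derivative
     pd a g 0 + (1/2) * ((\<Sum>l\<in>UNIV. pd a (pd l g) 0 * complex_of_real (x$l))
        + (\<Sum>k\<in>UNIV. pd k (pd a g) 0 * complex_of_real (x$k)))) (at 0)" by simp
qed

lemma pd_affine:
  "pd b (\<lambda>x. c0 + d * ((\<Sum>l\<in>UNIV. u l * complex_of_real (x$l)) +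
      (\<Sum>k\<in>UNIV. v k * complex_of_real (x$k)))) x
    = d * (u b + v b)"
proof (rule pd_eqI)
  have "((\<lambda>t. c0 + d * ((\<Sum>l\<in>UNIV. u l * complex_of_real ((x + t *\<^sub>R axis b 1)$l))
      + (\<Sum>k\<in>UNIV. v k * complex_of_real ((x + t *\<^sub>R axis b 1)$k)))) has_vector_derivative
     (0 + d * ((\<Sum>l\<in>UNIV. u l * (if l = b then 1 else 0)) +
         (\<Sum>k\<in>UNIV. v k * (if k = b then 1 else 0))))) (at 0)"
    by (intro has_vector_derivative_add has_vector_derivative_const has_vector_derivative_sum
        has_vector_derivative_mult_right has_vector_derivative_coord)
  then show "((\<lambda>t. c0 + d * ((\<Sum>l\<in>UNIV. u l * complex_of_real ((x + t *\<^sub>R axis b 1)$l))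
      + (\<Sum>k\<in>UNIV. v k * complex_of_real ((x + t *\<^sub>R axis b 1)$k)))) has_vector_derivative
     d * (u b + v b)) (at 0)" by (simp add: if_distrib[of "\<lambda>z. _ * z"] cong: if_cong)
qed

lemma smooth_taylor2:
  fixes f :: "real \<Rightarrow> real^'m::finite \<Rightarrow> complex"
  assumes "smooth f" shows "smooth (\<lambda>y x. taylor2 (f y) x)"
proof -
  have c0: "continuous_on {-1/4<..<1/4} (\<lambda>y. f y 0)" by (rule smooth_continuous_on[OF assms]) simp
  have c1: "continuous_on {-1/4<..<1/4} (\<lambda>y. pd k (f y) 0)" for k
    by (rule smooth_continuous_on[OF smooth_pd[OF assms]]) simp
  have c2: "continuous_on {-1/4<..<1/4} (\<lambda>y. pd k (pd l (f y)) 0)" for k l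
    by (rule smooth_continuous_on[OF smooth_pd[OF smooth_pd[OF assms]]]) simp
  have s0: "smooth (\<lambda>y x. f y 0)" by (rule smooth_coef[OF c0])
  have s1: "smooth (\<lambda>y x. \<Sum>k\<in>UNIV. pd k (f y) 0 * complex_of_real (x$k))"
    by (intro smooth_sum smooth_mult smooth_coef[OF c1] smooth_coord) auto
  have s2: "smooth (\<lambda>y x. (1/2) *
      (\<Sum>k\<in>UNIV. \<Sum>l\<in>UNIV. pd k (pd l (f y)) 0 * complex_of_real (x$k) *
      complex_of_real (x$l)))"
    by (intro smooth_sum smooth_mult smooth_coef[OF c2] smooth_coord smooth_const) auto
  show ?thesis unfolding taylor2_def by (intro smooth_add s0 s1 s2)
qed

lemma taylor2_0: "taylor2 g 0 = g 0" by (simp add: taylor2_def)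

lemma pds_taylor2_remainder_0:
  fixes f :: "real \<Rightarrow> real^'m::finite \<Rightarrow> complex"
  assumes f: "smooth f" and y: "near_origin y (0::real^'m)" and "length s < 3"
    and sym: "\<And>k l. pd k (pd l (f y)) 0 = pd l (pd k (f y)) 0"
  shows "pds s (\<lambda>y x. f y x - taylor2 (f y) x) y 0 = 0"
proof -
  have T: "smooth (\<lambda>y x. taylor2 (f y) x)" by (rule smooth_taylor2[OF f])
  consider "s = []" | a where "s = [a]" | a b where "s = [a, b]"
    using \<open>length s < 3\<close> by (cases s; cases "tl s"; cases "tl (tl s)") auto
  then show ?thesis
  proof cases
    case 1 then show ?thesis by (simp add: taylor2_0)
  next
    case (2 a)
    then show ?thesis by (simp add: pd_diff[OF f T y] pd_taylor2)
  next
    case (3 a b)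
    have "pds s (\<lambda>y x. f y x - taylor2 (f y) x) y 0 = pd b
        (\<lambda>x. pd a (f y) x - pd a (taylor2 (f y)) x) 0"
      using 3 y pd_diff[OF f T] by (auto intro!: pd_cong simp: near_origin_def)
    also have "\<dots> = pd b (pd a (f y)) 0 - pd b (pd a (taylor2 (f y))) 0"
      by (rule pd_diff[OF smooth_pd[OF f] smooth_pd[OF T] y])
    also have "pd b (pd a (taylor2 (f y))) 0 = (1/2) * (pd a (pd b (f y)) 0 + pd b (pd a (f y)) 0)"
      unfolding pd_taylor2[abs_def] by (rule pd_affine)
    finally show ?thesis using sym[of a b] by simp
  qed
qed

lemma order_ge_taylor2_remainder:
  fixes f :: "real \<Rightarrow> real^'m::finite \<Rightarrow> complex"
  assumes f: "smooth f" and sym: "\<And>y k l. \<bar>y\<bar> < 1/4 \<Longrightarrow> pd k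
      (pd l (f y)) 0 = pd l (pd k (f y)) 0"
  shows "order_ge (\<lambda>y x. f y x - taylor2 (f y) x) 3"
proof -
  let ?F = "\<lambda>y x. f y x - taylor2 (f y) x"
  have F: "smooth ?F" by (rule smooth_diff[OF f smooth_taylor2[OF f]])
  have "(\<lambda>y. pds s ?F y 0) \<in>
      O[at_right 0](\<lambda>y. complex_of_real y ^ (3 - length s))" for s :: "'m list"
  proof (cases "length s < 3")
    case True
    have ev: "eventually (\<lambda>y. pds s ?F y 0 = 0) (at_right 0)"
      using eventually_near_origin_0
      by (rule eventually_mono) (use f True sym in \<open>auto intro!: pds_taylor2_remainder_0
          simp: near_origin_def\<close>)
    show ?thesis using landau_o.big.in_cong[OF ev] by simp
  next
    case False
    then show ?thesis using smooth_order_ge_0[OF F] unfolding order_ge_def by simp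
  qed
  then show ?thesis using F unfolding order_ge_def by blast
qed

lemma holomorphic_comp_neg_sq_bigo:
  assumes "F holomorphic_on ball 0 1"
  shows "(\<lambda>y. F (- ((complex_of_real y)^2)) - F 0) \<in> O[at_right 0](\<lambda>y. complex_of_real y)"
proof -
  have "(F has_field_derivative deriv F 0) (at 0)"
    by (rule holomorphic_derivI[OF assms open_ball]) simp
  then have "((\<lambda>z. (F z - F 0) / (z - 0)) \<longlongrightarrow> deriv F 0) (at 0)"
    by (simp only: has_field_derivative_iff)
  then have F_lin: "(\<lambda>z. F z - F 0) \<in> O[at 0](\<lambda>z. z)"
    by (intro bigoI_tendsto[where c = "deriv F 0"]) (auto simp: eventually_at_filter)
  have "filterlim (\<lambda>y. - ((complex_of_real y)^2)) (at 0) (at_right 0)"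
    unfolding filterlim_at
  proof
    show "eventually (\<lambda>y. - ((complex_of_real y)^2) \<in> UNIV \<and> - ((complex_of_real y)^2) \<noteq> 0)
        (at_right 0)"
      using eventually_at_right_less[of "0::real"] by (rule eventually_mono) auto
    show "((\<lambda>y. - ((complex_of_real y)^2)) \<longlongrightarrow> 0) (at_right 0)"
      by (rule tendsto_eq_intros refl | simp)+
  qed
  from landau_o.big.compose[OF F_lin this]
  have "(\<lambda>y. F (- ((complex_of_real y)^2)) - F 0) \<in> O[at_right 0](\<lambda>y. - ((complex_of_real y)^2))"
    by simp
  also have "(\<lambda>y. - ((complex_of_real y)^2)) \<in> O[at_right 0](\<lambda>y. complex_of_real y)"
    using bigo_power_mono[of 1 2] by simp
  finally show ?thesis .
qed

definition dB_sqrt :: "complex \<Rightarrow> complex" where "dB_sqrt = deriv B_sqrt"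
definition d2B_sqrt :: "complex \<Rightarrow> complex" where "d2B_sqrt = deriv dB_sqrt"

lemma holomorphic_dB_sqrt: "dB_sqrt holomorphic_on ball 0 1"
  unfolding dB_sqrt_def by (rule holomorphic_deriv[OF holomorphic_B_sqrt open_ball])
lemma holomorphic_d2B_sqrt: "d2B_sqrt holomorphic_on ball 0 1"
  unfolding d2B_sqrt_def by (rule holomorphic_deriv[OF holomorphic_dB_sqrt open_ball])

(* psi_omega in terms of y = y_omega, with omega replaced by theta y. *)
definition psi_y :: "'m::finite \<Rightarrow> real \<Rightarrow> real^'m \<Rightarrow> complex" where
  "psi_y i y x = complex_of_real (theta y) * complex_of_real (x$i) + \<i> *
      (B_sqrt (shifted_sq i y x) - B_sqrt (shifted_sq i y 0))"

lemma continuous_on_theta: "continuous_on {-1/4<..<1/4} (\<lambda>y. complex_of_real (theta y))"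
proof -
  have "continuous_on {-1/4<..<1/4} theta"
    by (intro continuous_at_imp_continuous_on ballI isCont_theta) (use pi_gt3 in auto)
  then show ?thesis by simp
qed

lemma near_origin_0: "near_origin y x \<Longrightarrow> near_origin y 0" by (simp add: near_origin_def)

lemma smooth_shifted_sq_0: "smooth (\<lambda>y x. shifted_sq i y 0)"
  unfolding shifted_sq_0 by (intro smooth_coef continuous_intros)

lemma smooth_B_sqrt_shifted_sq: "smooth (\<lambda>y x. B_sqrt (shifted_sq i y x))"
  by (rule smooth_comp[OF smooth_shifted_sq shifted_sq_in_ball holomorphic_B_sqrt])
lemma smooth_B_sqrt_shifted_sq_0: "smooth (\<lambda>y x. B_sqrt (shifted_sq i y 0))"
  by (rule smooth_comp[OF smooth_shifted_sq_0 shifted_sq_in_ball[OF near_origin_0] holomorphic_B_sqrt])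

lemma smooth_psi_y: "smooth (psi_y i)"
  unfolding psi_y_def[abs_def]
  by (intro smooth_add smooth_mult smooth_coef[OF continuous_on_theta] smooth_coord smooth_const
      smooth_diff smooth_B_sqrt_shifted_sq smooth_B_sqrt_shifted_sq_0)

definition grad_psi_y :: "'m::finite \<Rightarrow> 'm \<Rightarrow> real \<Rightarrow> real^'m
    \<Rightarrow> complex" where
  "grad_psi_y i l y x = complex_of_real (theta y) * (if i = l then 1 else 0) + \<i> *
      (dB_sqrt (shifted_sq i y x) * (2 * shifted_coord i l y x))"

lemma pd_psi_y: assumes "near_origin y x" shows "pd l (psi_y i y) x = grad_psi_y i l y x"
proof -
  have st: "smooth (\<lambda>y x. complex_of_real (theta y) * complex_of_real (x$i))"
    by (intro smooth_mult smooth_coef[OF continuous_on_theta] smooth_coord)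
  have sg: "smooth (\<lambda>y x. \<i> * (B_sqrt (shifted_sq i y x) - B_sqrt (shifted_sq i y 0)))"
    by (intro smooth_mult smooth_const smooth_diff smooth_B_sqrt_shifted_sq smooth_B_sqrt_shifted_sq_0)
  have "pd l (psi_y i y) x = pd l
      (\<lambda>x. complex_of_real (theta y) * complex_of_real (x$i) + \<i> *
      (B_sqrt (shifted_sq i y x) - B_sqrt (shifted_sq i y 0))) x"
    by (simp add: psi_y_def[abs_def])
  also have "\<dots> = pd l (\<lambda>x. complex_of_real (theta y) * complex_of_real (x$i)) x
      + pd l (\<lambda>x. \<i> * (B_sqrt (shifted_sq i y x) - B_sqrt (shifted_sq i y 0))) x"
    by (rule pd_add[OF st sg assms])
  also have "pd l (\<lambda>x. complex_of_real (theta y) * complex_of_real (x$i)) x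
      = complex_of_real (theta y) * pd l (\<lambda>x. complex_of_real (x$i)) x"
    by (rule pd_cmult[OF smooth_coord assms])
  also have "pd l (\<lambda>x. \<i> * (B_sqrt (shifted_sq i y x) - B_sqrt (shifted_sq i y 0))) x
      = \<i> * pd l (\<lambda>x. B_sqrt (shifted_sq i y x) - B_sqrt (shifted_sq i y 0)) x"
    by (rule pd_cmult[OF smooth_diff[OF smooth_B_sqrt_shifted_sq smooth_B_sqrt_shifted_sq_0] assms])
  also have "pd l (\<lambda>x. B_sqrt (shifted_sq i y x) - B_sqrt (shifted_sq i y 0)) x = pd l
      (\<lambda>x. B_sqrt (shifted_sq i y x)) x - pd l (\<lambda>x. B_sqrt (shifted_sq i y 0)) x"
    by (rule pd_diff[OF smooth_B_sqrt_shifted_sq smooth_B_sqrt_shifted_sq_0 assms])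
  also have "pd l (\<lambda>x. B_sqrt (shifted_sq i y x)) x = deriv B_sqrt (shifted_sq i y x) * pd
      l (shifted_sq i y) x"
    by (rule pd_comp[OF smooth_shifted_sq shifted_sq_in_ball holomorphic_B_sqrt assms])
  also have "pd l (\<lambda>x. B_sqrt (shifted_sq i y 0)) x = 0" by (rule pd_const)
  finally show ?thesis using pd_shifted_sq[OF assms] by (simp add: grad_psi_y_def pd_coord dB_sqrt_def)
qed

lemma pd_grad_psi_y: assumes "near_origin y x"
  shows "pd k (grad_psi_y i l y) x = \<i> *
      (d2B_sqrt (shifted_sq i y x) * (2 * shifted_coord i k y x) * (2 * shifted_coord i l y x)
          + dB_sqrt (shifted_sq i y x) * (2 * (if l = k then 1 else 0)))"
proof -
  have s1: "smooth (\<lambda>y x. complex_of_real (theta y) * (if i = l then 1 else 0))"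
    by (intro smooth_mult smooth_coef[OF continuous_on_theta] smooth_const)
  have sB: "smooth (\<lambda>y x. dB_sqrt (shifted_sq i y x))" by
      (rule smooth_comp[OF smooth_shifted_sq shifted_sq_in_ball holomorphic_dB_sqrt])
  have sL: "smooth (\<lambda>y x. 2 * shifted_coord i l y x)" by
      (intro smooth_mult smooth_const smooth_shifted_coord)
  have s2: "smooth (\<lambda>y x. \<i> *
      (dB_sqrt (shifted_sq i y x) * (2 * shifted_coord i l y x)))" by
      (intro smooth_mult smooth_const sB sL)
  have "pd k (grad_psi_y i l y) x = pd k (\<lambda>x. complex_of_real (theta y) * (if i = l then 1 else 0)
        + \<i> * (dB_sqrt (shifted_sq i y x) * (2 * shifted_coord i l y x))) x"
    by (simp add: grad_psi_y_def[abs_def])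
  also have "\<dots> = pd k (\<lambda>x. complex_of_real (theta y) * (if i = l then 1 else 0)) x
      + pd k (\<lambda>x. \<i> * (dB_sqrt (shifted_sq i y x) * (2 * shifted_coord i l y x))) x"
    by (rule pd_add[OF s1 s2 assms])
  also have "pd k (\<lambda>x. complex_of_real (theta y) * (if i = l then 1 else 0)) x = 0" by (rule pd_const)
  also have "pd k (\<lambda>x. \<i> * (dB_sqrt (shifted_sq i y x) * (2 * shifted_coord i l y x))) x
      = \<i> * pd k (\<lambda>x. dB_sqrt (shifted_sq i y x) * (2 * shifted_coord i l y x)) x"
    by (rule pd_cmult[OF smooth_mult[OF sB sL] assms])
  also have "pd k (\<lambda>x. dB_sqrt (shifted_sq i y x) * (2 * shifted_coord i l y x)) x
     = dB_sqrt (shifted_sq i y x) * pd k (\<lambda>x. 2 * shifted_coord i l y x) x + pd k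
         (\<lambda>x. dB_sqrt (shifted_sq i y x)) x * (2 * shifted_coord i l y x)"
    by (rule pd_mult[OF sB sL assms])
  also have "pd k (\<lambda>x. 2 * shifted_coord i l y x) x = 2 * pd k (shifted_coord i l y) x" by
      (rule pd_cmult[OF smooth_shifted_coord assms])
  also have "pd k (\<lambda>x. dB_sqrt (shifted_sq i y x)) x = deriv dB_sqrt (shifted_sq i y x) *
      pd k (shifted_sq i y) x"
    by (rule pd_comp[OF smooth_shifted_sq shifted_sq_in_ball holomorphic_dB_sqrt assms])
  finally show ?thesis using pd_shifted_sq[OF assms] by
      (simp add: pd_shifted_coord d2B_sqrt_def algebra_simps)
qed

definition hess_psi_y :: "'m::finite \<Rightarrow> real \<Rightarrow> 'm \<Rightarrow> 'm
    \<Rightarrow> complex" where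
  "hess_psi_y i y k l = \<i> * (d2B_sqrt (- ((complex_of_real y)^2)) * (2 * shift_coord i k y) *
      (2 * shift_coord i l y)
          + dB_sqrt (- ((complex_of_real y)^2)) * (2 * (if l = k then 1 else 0)))"

lemma pd_pd_psi_y_0: assumes "\<bar>y\<bar> < 1/4"
  shows "pd k (pd l (psi_y i y)) 0 = hess_psi_y i y k l"
proof -
  have y0: "near_origin y 0" using assms by (simp add: near_origin_def)
  have "pd k (pd l (psi_y i y)) 0 = pd k (grad_psi_y i l y) 0"
    by (rule pd_cong) (use pd_psi_y assms in \<open>auto simp: near_origin_def\<close>)
  also have "\<dots> = \<i> * (d2B_sqrt (shifted_sq i y 0) * (2 * shifted_coord i k y 0) *
      (2 * shifted_coord i l y 0)
          + dB_sqrt (shifted_sq i y 0) * (2 * (if l = k then 1 else 0)))" by (rule pd_grad_psi_y[OF y0])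
  also have "\<dots> = hess_psi_y i y k l" by (simp only: hess_psi_y_def shifted_sq_0)
      (simp add: shifted_coord_def)
  finally show ?thesis .
qed

lemma hess_psi_y_sym: "hess_psi_y i y k l = hess_psi_y i y l k"
  by (simp add: hess_psi_y_def mult_ac)

lemma hess_psi_y_offdiag: "k \<noteq> l \<Longrightarrow> hess_psi_y i y k l = 0"
  by (auto simp: hess_psi_y_def shift_coord_def)

lemma order_ge_psi_y_remainder: "order_ge (\<lambda>y x. psi_y i y x - taylor2 (psi_y i y) x) 3"
  by (rule order_ge_taylor2_remainder[OF smooth_psi_y]) (simp add: pd_pd_psi_y_0 hess_psi_y_sym)

lemma psi_eq_psi_y: assumes "theta (yom w) = w"
  shows "psi w i = psi_y i (yom w)"
proof
  fix x
  have e1: "cvec x + axis i (\<i> * complex_of_real (yom w)) = shifted i (yom w) x" by (simp add: shifted_def)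
  have e2: "axis i (\<i> * complex_of_real (yom w)) = shifted i (yom w) 0" by
      (simp add: shifted_def cvec_def zero_vec_def)
  have "psi w i x = complex_of_real w * cbil (shifted i (yom w) x) (axis i 1) + \<i> * B_sqrt
      (csq (shifted i (yom w) x))
      - (complex_of_real w * cbil (shifted i (yom w) 0) (axis i 1) + \<i> * B_sqrt
          (csq (shifted i (yom w) 0)))"
    unfolding psi_def phi_def evenapp_def e1 unfolding e2 B_sqrt_def ..
  also have "\<dots> = complex_of_real w * shifted_coord i i (yom w) x + \<i> * B_sqrt
      (shifted_sq i (yom w) x)
      - (complex_of_real w * shifted_coord i i (yom w) 0 + \<i> * B_sqrt (shifted_sq i (yom w) 0))"
    by (simp only: cbil_shifted_axis csq_shifted)
  also have "\<dots> = psi_y i (yom w) x"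
    using assms by (simp add: psi_y_def shifted_coord_self algebra_simps)
  finally show "psi w i x = psi_y i (yom w) x" .
qed

definition amp :: "nat \<Rightarrow> nat \<Rightarrow> nat \<Rightarrow> 'm::finite \<Rightarrow>
    real \<Rightarrow> real^'m \<Rightarrow> complex" where
  "amp n k1 k2 i y x = (-1)^k1 * \<i>^k2 * A_sqrt n k1 (shifted_sq i y x)"

definition a_y :: "nat \<Rightarrow> nat \<Rightarrow> nat \<Rightarrow> 'm::finite \<Rightarrow>
    real \<Rightarrow> real^'m \<Rightarrow> complex" where
  "a_y n k1 k2 i y x = amp n k1 k2 i y x * shifted_coord i i y x ^ k2"

lemma a_om_eq_a_y: "a_om n k1 k2 i w = a_y n k1 k2 i (yom w)"
proof
  fix x
  show "a_om n k1 k2 i w x = a_y n k1 k2 i (yom w) x"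
    by (simp add: a_om_def a_fun_def evenapp_def a_y_def amp_def A_sqrt_def[symmetric] shifted_def[symmetric]
          csq_shifted cbil_shifted_axis mult_ac)
qed

lemma smooth_amp: "smooth (amp n k1 k2 i)"
  unfolding amp_def[abs_def] by (intro smooth_mult smooth_const
      smooth_comp[OF smooth_shifted_sq shifted_sq_in_ball holomorphic_A_sqrt])

lemma order_ge_shifted_coord_power: "order_ge (\<lambda>y x. shifted_coord i i y x ^ m) m"
proof -
  have "(\<lambda>y. pds s (\<lambda>y x. shifted_coord i i y x ^ m) y 0) \<in>
      O[at_right 0](\<lambda>y. complex_of_real y ^ (m - length s))" for s
  proof -
    define P where "P = (if set s \<subseteq> {i} then (\<Prod>j<length s. of_nat (m - j)) else (0::complex))"
    have ev: "eventually (\<lambda>y. pds s (\<lambda>y x. shifted_coord i i y x ^ m) y 0 = P *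
        \<i>^(m - length s) * complex_of_real y ^ (m - length s)) (at_right 0)"
      using eventually_near_origin_0
    proof (rule eventually_mono)
      fix y assume y: "near_origin y (0::real^'a)"
      have "pds s (\<lambda>y x. shifted_coord i i y x ^ m) y 0 = pds s
          (\<lambda>y x. 1 * shifted_coord i i y x ^ m) y 0" by simp
      also have "\<dots> = P * shifted_coord i i y 0 ^ (m - length s)" using
          pds_shifted_coord_power[OF y, of s 1 i m] by (simp add: P_def)
      finally show "pds s (\<lambda>y x. shifted_coord i i y x ^ m) y 0 = P * \<i>^(m - length s) *
          complex_of_real y ^ (m - length s)"
        by (simp add: shifted_coord_self power_mult_distrib)
    qed
    have "(\<lambda>y. P * \<i>^(m - length s) * complex_of_real y ^ (m - length s)) \<in>
        O[at_right 0](\<lambda>y. complex_of_real y ^ (m - length s))"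
      by simp
    then show ?thesis using landau_o.big.in_cong[OF ev] by simp
  qed
  then show ?thesis unfolding order_ge_def by (auto intro: smooth_power smooth_shifted_coord)
qed

lemma order_ge_a_y: "order_ge (a_y n k1 k2 i) k2"
proof -
  have "order_ge (\<lambda>y x. amp n k1 k2 i y x * shifted_coord i i y x ^ k2) (0 + k2)"
    by (intro order_ge_mult smooth_order_ge_0 smooth_amp order_ge_shifted_coord_power)
  then show ?thesis by (simp add: a_y_def[abs_def])
qed

lemma order_ge_amp_diff: "order_ge (\<lambda>y x. amp n k1 k2 i y x - amp n k1 k2 i y 0) 1"
proof -
  have S: "smooth (\<lambda>y x. amp n k1 k2 i y x - amp n k1 k2 i y 0)"
    by (intro smooth_diff smooth_amp smooth_coef smooth_continuous_on[OF smooth_amp]) simp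
  have "(\<lambda>y. pds s (\<lambda>y x. amp n k1 k2 i y x - amp n k1 k2 i y 0) y 0) \<in>
      O[at_right 0](\<lambda>y. complex_of_real y ^ (1 - length s))"
    for s :: "'a list"
  proof (cases s)
    case Nil then show ?thesis by simp
  next
    case (Cons a t)
    have ev: "eventually (\<lambda>y. pds s (\<lambda>y x. amp n k1 k2 i y x - amp n k1 k2 i y 0) y
        0 = pds s (amp n k1 k2 i) y 0) (at_right 0)"
      using eventually_near_origin_0
    proof (rule eventually_mono)
      fix y assume y: "near_origin y (0::real^'a)"
      have "pds s (\<lambda>y x. amp n k1 k2 i y x + (-1) * amp n k1 k2 i y 0) y 0 = pds s
          (amp n k1 k2 i) y 0 + pds s (\<lambda>y x. (-1) * amp n k1 k2 i y 0) y 0"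
        by (rule pds_add[OF smooth_amp _ y])
            (intro smooth_mult smooth_const smooth_coef smooth_continuous_on[OF smooth_amp], simp)
      also have "pds s (\<lambda>y x. (-1) * amp n k1 k2 i y 0) y 0 = 0" using Cons
          pds_Cons_coef[of a t "\<lambda>y. (-1) * amp n k1 k2 i y 0"] by simp
      finally show "pds s (\<lambda>y x. amp n k1 k2 i y x - amp n k1 k2 i y 0) y 0 = pds s
          (amp n k1 k2 i) y 0" by simp
    qed
    have "(\<lambda>y. pds s (amp n k1 k2 i) y 0) \<in>
        O[at_right 0](\<lambda>y. complex_of_real y ^ (0 - length s))"
      using smooth_order_ge_0[OF smooth_amp] unfolding order_ge_def by blast
    then show ?thesis using landau_o.big.in_cong[OF ev] Cons by simp
  qed
  then show ?thesis using S unfolding order_ge_def by blast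
qed

lemma matrix_inv_eqI:
  fixes A B :: "'a::semiring_1^'n^'n"
  assumes "A ** B = mat 1" "B ** A = mat 1"
  shows "matrix_inv A = B"
proof -
  have "A ** matrix_inv A = mat 1 \<and> matrix_inv A ** A = mat 1"
    unfolding matrix_inv_def by (rule someI[of _ B]) (use assms in blast)
  then have "matrix_inv A = (matrix_inv A ** A) ** B"
    by (metis assms(1) matrix_mul_assoc matrix_mul_rid)
  then show ?thesis using \<open>_ \<and> _\<close> by simp
qed

lemma diag_matrix_mult:
  "(\<chi> k l. if k = l then d k else 0) ** (\<chi> k l. if k = l then e k else 0)
     = (\<chi> k l. if k = l then d k * e k else (0::'a::semiring_1))"
  by (simp add: matrix_matrix_mult_def vec_eq_iff if_distrib[of "\<lambda>x. x * _"] cong: if_cong)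

lemma matrix_inv_diag:
  fixes d :: "'n::finite \<Rightarrow> 'a::field"
  assumes "\<And>k. d k \<noteq> 0"
  shows "matrix_inv (\<chi> k l. if k = l then d k else 0) = (\<chi> k l. if k = l then inverse (d k) else 0)"
  using assms by (intro matrix_inv_eqI) (simp_all add: diag_matrix_mult mat_def fun_eq_iff)

definition hess_diag :: "'m::finite \<Rightarrow> real \<Rightarrow> 'm \<Rightarrow> complex"
    where "hess_diag i y k = hess_psi_y i y k k"

lemma hess0_psi_y: assumes "\<bar>y\<bar> < 1/4"
  shows "hess0 (psi_y i y) = (\<chi> k l. if k = l then hess_diag i y k else 0)"
  using assms by (auto simp: hess0_def vec_eq_iff pd_pd_psi_y_0 hess_diag_def hess_psi_y_offdiag)

lemma dB_sqrt_0: "dB_sqrt 0 = 1/3" by (simp add: dB_sqrt_def deriv_B_sqrt_0)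

lemma continuous_on_comp_neg_sq:
  assumes "F holomorphic_on ball 0 1"
  shows "continuous_on {-1/4<..<1/4} (\<lambda>y. F (- ((complex_of_real y)^2)))"
proof (rule continuous_on_compose2[of "ball 0 1" F])
  show "continuous_on (ball 0 1) F" using assms holomorphic_on_imp_continuous_on by blast
  show "continuous_on {-1/4<..<1/4} (\<lambda>y. - ((complex_of_real y)^2))" by (intro continuous_intros)
  show "(\<lambda>y. - ((complex_of_real y)^2)) ` {-1/4<..<1/4} \<subseteq> ball 0 1"
  proof
    fix z assume "z \<in> (\<lambda>y. - ((complex_of_real y)^2)) ` {-1/4<..<1/4}"
    then obtain y where y0: "y \<in> {-1/4<..<1/4}" and y1: "z = - ((complex_of_real y)^2)" by blast
    have y: "\<bar>y\<bar> < 1/4" "z = - ((complex_of_real y)^2)" using y0 y1 by auto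
    have "\<bar>y\<bar>^2 \<le> (1/4)^2" using y by (intro power_mono) auto
    then have "y * y < 1" by (simp add: power2_eq_square)
    then show "z \<in> ball 0 1" using y by (simp add: norm_mult power2_eq_square abs_mult_self_eq)
  qed
qed

lemma shift_coord_sq_bigo: "(\<lambda>y. (2 * shift_coord i k y) * (2 * shift_coord i k y)) \<in>
    O[at_right 0](\<lambda>y. complex_of_real y)"
proof (rule bigoI[of _ "4::real"])
  show "eventually (\<lambda>y. norm ((2 * shift_coord i k y) * (2 * shift_coord i k y)) \<le> 4 *
      norm (complex_of_real y)) (at_right 0)"
    using eventually_at_right_real[OF zero_less_one]
  proof (rule eventually_mono)
    fix y :: real assume y: "y \<in> {0<..<1}"
    then have "y * y \<le> y" by (simp add: mult_le_cancel_left1)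
    then show "norm ((2 * shift_coord i k y) * (2 * shift_coord i k y)) \<le> 4 * norm (complex_of_real y)"
      using y by (auto simp: shift_coord_def norm_mult)
  qed
qed

lemma hess_diag_asymp: "(\<lambda>y. hess_diag i y k - 2 * \<i> / 3) \<in>
    O[at_right 0](\<lambda>y. complex_of_real y)"
proof -
  have b2: "(\<lambda>y. d2B_sqrt (- ((complex_of_real y)^2))) \<in> O[at_right 0](\<lambda>y. 1)"
    by (rule continuous_on_bigo_1[OF continuous_on_comp_neg_sq[OF holomorphic_d2B_sqrt]])
  have t1: "(\<lambda>y. d2B_sqrt (- ((complex_of_real y)^2)) *
      ((2 * shift_coord i k y) * (2 * shift_coord i k y))) \<in>
      O[at_right 0](\<lambda>y. 1 * complex_of_real y)"
    by (rule landau_o.big_mult[OF b2 shift_coord_sq_bigo])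
  have t2: "(\<lambda>y. dB_sqrt (- ((complex_of_real y)^2)) - dB_sqrt 0) \<in>
      O[at_right 0](\<lambda>y. complex_of_real y)"
    by (rule holomorphic_comp_neg_sq_bigo[OF holomorphic_dB_sqrt])
  have "(\<lambda>y. \<i> * (d2B_sqrt (- ((complex_of_real y)^2)) *
      ((2 * shift_coord i k y) * (2 * shift_coord i k y))) + (2 * \<i>) *
      (dB_sqrt (- ((complex_of_real y)^2)) - dB_sqrt 0))
        \<in> O[at_right 0](\<lambda>y. complex_of_real y)"
    using t1 t2 by (intro sum_in_bigo(1)) auto
  moreover have "\<i> * (d2B_sqrt (- ((complex_of_real y)^2)) *
      ((2 * shift_coord i k y) * (2 * shift_coord i k y))) + (2 * \<i>) *
      (dB_sqrt (- ((complex_of_real y)^2)) - dB_sqrt 0)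
      = hess_diag i y k - 2 * \<i> / 3" for y
    by (simp add: hess_diag_def hess_psi_y_def dB_sqrt_0 algebra_simps)
  ultimately show ?thesis by simp
qed

lemma asymp_imp_tendsto:
  fixes a :: "real \<Rightarrow> complex"
  assumes "(\<lambda>y. a y - A) \<in> O[at_right 0](\<lambda>y. complex_of_real y)"
  shows "(a \<longlongrightarrow> A) (at_right 0)"
proof -
  have "(\<lambda>y. complex_of_real y) \<in> o[at_right 0](\<lambda>_. 1)"
    by (rule smalloI_tendsto) (auto intro!: tendsto_eq_intros tendsto_ident_at)
  with assms have "(\<lambda>y. a y - A) \<in> o[at_right 0](\<lambda>_. 1)"
    by (rule landau_o.big_small_trans)
  from smalloD_tendsto[OF this] have "((\<lambda>y. a y - A) \<longlongrightarrow> 0) (at_right 0)" by simp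
  then show ?thesis by (simp add: LIM_zero_iff)
qed

lemma inverse_asymp:
  fixes a :: "real \<Rightarrow> complex"
  assumes a: "(\<lambda>y. a y - A) \<in> O[at_right 0](\<lambda>y. complex_of_real y)" and "A \<noteq> 0"
  shows "(\<lambda>y. inverse (a y) - inverse A) \<in> O[at_right 0](\<lambda>y. complex_of_real y)"
    and "eventually (\<lambda>y. a y \<noteq> 0) (at_right 0)"
proof -
  have lim: "(a \<longlongrightarrow> A) (at_right 0)" by (rule asymp_imp_tendsto[OF a])
  show ev: "eventually (\<lambda>y. a y \<noteq> 0) (at_right 0)"
    by (rule tendsto_imp_eventually_ne[OF lim \<open>A \<noteq> 0\<close>])
  have "(\<lambda>y. inverse (a y) * inverse A) \<in> O[at_right 0](\<lambda>_. 1)"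
    using \<open>A \<noteq> 0\<close> by (intro bigoI_tendsto[where c = "inverse A * inverse A"])
        (auto intro!: tendsto_intros lim)
  with a have "(\<lambda>y. (a y - A) * (inverse (a y) * inverse A)) \<in>
      O[at_right 0](\<lambda>y. complex_of_real y * 1)"
    by (rule landau_o.big_mult)
  then have bnd: "(\<lambda>y. - ((a y - A) * (inverse (a y) * inverse A))) \<in>
      O[at_right 0](\<lambda>y. complex_of_real y)"
    by simp
  have eq: "eventually (\<lambda>y. - ((a y - A) * (inverse (a y) * inverse A)) = inverse (a y) -
      inverse A) (at_right 0)"
    using ev by (rule eventually_mono)
        (use \<open>A \<noteq> 0\<close> in \<open>simp add: field_simps\<close>)
  show "(\<lambda>y. inverse (a y) - inverse A) \<in> O[at_right 0](\<lambda>y. complex_of_real y)"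
    using landau_o.big.in_cong[OF eq] bnd by simp
qed

lemma asymp_imp_bounded:
  fixes a :: "real \<Rightarrow> complex"
  assumes "(\<lambda>y. a y - A) \<in> O[at_right 0](\<lambda>y. complex_of_real y)"
  shows "a \<in> O[at_right 0](\<lambda>y. 1)"
  using asymp_imp_tendsto[OF assms] by (intro bigoI_tendsto[where c = A]) auto

lemma mult_asymp:
  assumes "(\<lambda>y. a y - A) \<in> O[at_right 0](\<lambda>y. complex_of_real y)"
      and "(\<lambda>y. b y - B) \<in> O[at_right 0](\<lambda>y. complex_of_real y)"
  shows "(\<lambda>y. a y * b y - A * B) \<in> O[at_right 0](\<lambda>y. complex_of_real y)"
proof -
  have 1: "(\<lambda>y. a y * (b y - B)) \<in> O[at_right 0](\<lambda>y. 1 * complex_of_real y)"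
    by (rule landau_o.big_mult[OF asymp_imp_bounded[OF assms(1)] assms(2)])
  have 2: "(\<lambda>y. B * (a y - A)) \<in> O[at_right 0](\<lambda>y. complex_of_real y)"
    using assms(1) by (cases "B = 0") auto
  have "(\<lambda>y. a y * (b y - B) + B * (a y - A)) \<in> O[at_right 0](\<lambda>y. complex_of_real y)"
    using 1 2 by (intro sum_in_bigo(1)) auto
  moreover have "a y * (b y - B) + B * (a y - A) = a y * b y - A * B" for y by (simp add: algebra_simps)
  ultimately show ?thesis by simp
qed

lemma power_asymp:
  assumes "(\<lambda>y. a y - A) \<in> O[at_right 0](\<lambda>y. complex_of_real y)"
  shows "(\<lambda>y. a y ^ m - A ^ m) \<in> O[at_right 0](\<lambda>y. complex_of_real y)"
proof (induction m)
  case 0 then show ?case by simp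
next
  case (Suc m)
  from mult_asymp[OF assms Suc] show ?case by simp
qed

definition hess_inv :: "'m::finite \<Rightarrow> real \<Rightarrow> complex^'m^'m" where
  "hess_inv i y = (\<chi> k l. if k = l then inverse (hess_diag i y k) else 0)"

lemma eventually_hess_diag_nonzero: "eventually
    (\<lambda>y. \<forall>k. hess_diag i y k \<noteq> 0) (at_right 0)"
  by (intro eventually_all_finite inverse_asymp(2)[OF hess_diag_asymp]) simp

lemma eventually_matrix_inv_hess0: "eventually
    (\<lambda>y. matrix_inv (hess0 (psi_y i y)) = hess_inv i y) (at_right 0)"
  using eventually_conj[OF eventually_hess_diag_nonzero[of i] eventually_near_origin_0]
proof (rule eventually_mono)
  fix y assume h: "(\<forall>k. hess_diag i y k \<noteq> 0) \<and> near_origin y (0::real^'a)"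
  then have "\<bar>y\<bar> < 1/4" by (simp add: near_origin_def)
  then have "hess0 (psi_y i y) = (\<chi> k l. if k = l then hess_diag i y k else 0)" by (rule hess0_psi_y)
  then show "matrix_inv (hess0 (psi_y i y)) = hess_inv i y"
    using matrix_inv_diag[of "hess_diag i y"] h by (simp add: hess_inv_def)
qed

lemma inverse_hess_diag_asymp: "(\<lambda>y. inverse (hess_diag i y k) - (- 3 * \<i> / 2)) \<in>
    O[at_right 0](\<lambda>y. complex_of_real y)"
proof -
  have "inverse (2 * \<i> / 3) = - 3 * \<i> / 2" by (simp add: field_simps)
  then show ?thesis using inverse_asymp(1)[OF hess_diag_asymp[of i k]] by (simp add: mult.commute)
qed

lemma hess_inv_bounded: "(\<lambda>y. hess_inv i y $ k $ l) \<in> O[at_right 0](\<lambda>y. 1)"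
proof (cases "k = l")
  case True
  then show ?thesis using asymp_imp_bounded[OF inverse_hess_diag_asymp[of i k]] by (simp add: hess_inv_def)
next
  case False then show ?thesis by (simp add: hess_inv_def)
qed

lemma entry_prod_bounded:
  fixes M :: "'a \<Rightarrow> complex^'m::finite^'m"
  assumes "\<And>k l. (\<lambda>y. M y $ k $ l) \<in> O[F](\<lambda>_. 1)"
  shows "(\<lambda>y. entry_prod (M y) ps) \<in> O[F](\<lambda>_. 1)"
proof (induction ps)
  case Nil then show ?case by (simp add: entry_prod_def)
next
  case (Cons p ps)
  have "(\<lambda>y. M y $ fst p $ snd p * entry_prod (M y) ps) \<in> O[F](\<lambda>_. 1 * 1)"
    by (rule landau_o.big_mult[OF assms Cons])
  then show ?case by (simp add: entry_prod_def)
qed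

definition L_summand :: "nat \<Rightarrow> nat \<Rightarrow> nat \<Rightarrow> 'm::finite
    \<Rightarrow> nat \<Rightarrow> real \<Rightarrow> real^'m \<Rightarrow> complex" where
  "L_summand n k1 k2 i \<mu> y x = (psi_y i y x - taylor2 (psi_y i y) x) ^ \<mu> * a_y n k1 k2 i y x"

lemma order_ge_L_summand: "order_ge (L_summand n k1 k2 i \<mu>) (\<mu> * 3 + k2)"
  unfolding L_summand_def[abs_def] by
      (intro order_ge_mult order_ge_power order_ge_psi_y_remainder order_ge_a_y)

lemma Dop_funpow_bigo:
  fixes h :: "real \<Rightarrow> real^'m::finite \<Rightarrow> complex" and M :: "real
      \<Rightarrow> complex^'m^'m"
  assumes M: "\<And>k l. (\<lambda>y. M y $ k $ l) \<in> O[at_right 0](\<lambda>_. 1)"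
    and h: "order_ge h r" and le: "e \<le> r - 2 * t"
  shows "(\<lambda>y. (Dop (M y) ^^ t) (h y) 0) \<in> O[at_right 0](\<lambda>y. complex_of_real y ^ e)"
proof -
  have ev: "eventually (\<lambda>y. (Dop (M y) ^^ t) (h y) 0
      = (\<Sum>ps\<in>pair_lists t. entry_prod (M y) ps * pds (pair_word ps) h y 0)) (at_right 0)"
    using eventually_near_origin_0 h
    by (auto elim!: eventually_mono intro: Dop_funpow_eq simp: order_ge_def)
  have "(\<lambda>y. \<Sum>ps\<in>pair_lists t. entry_prod (M y) ps * pds (pair_word ps) h y 0)
      \<in> O[at_right 0](\<lambda>y. complex_of_real y ^ e)"
  proof (rule big_sum_in_bigo)
    fix ps :: "('m \<times> 'm) list" assume ps: "ps \<in> pair_lists t"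
    have "(\<lambda>y. pds (pair_word ps) h y 0) \<in>
        O[at_right 0](\<lambda>y. complex_of_real y ^ (r - length (pair_word ps)))"
      using h order_ge_def by blast
    moreover have "length (pair_word ps) = 2 * t" using ps by (simp add: length_pair_word pair_lists_def)
    ultimately have "(\<lambda>y. pds (pair_word ps) h y 0) \<in>
        O[at_right 0](\<lambda>y. complex_of_real y ^ e)"
      using le by (auto elim!: landau_o.big.trans[OF _ bigo_power_mono])
    from landau_o.big_mult[OF entry_prod_bounded[OF M] this]
    show "(\<lambda>y. entry_prod (M y) ps * pds (pair_word ps) h y 0) \<in>
        O[at_right 0](\<lambda>y. complex_of_real y ^ e)"
      by simp
  qed
  then show ?thesis using landau_o.big.in_cong[OF ev] by simp
qed

lemma pair_word_subset_iff: "set (pair_word ps) \<subseteq> {i} \<longleftrightarrow> set ps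
    \<subseteq> {(i,i)}"
  by (induction ps) (auto simp: pair_word_def)

lemma pair_lists_diag_iff:
  assumes "ps \<in> pair_lists j" shows "set ps \<subseteq> {(i,i)} \<longleftrightarrow> ps =
      replicate j (i,i)"
proof
  assume "set ps \<subseteq> {(i,i)}"
  then show "ps = replicate j (i,i)" using assms by (intro replicate_eqI) (auto simp: pair_lists_def)
qed auto

lemma entry_prod_replicate: "entry_prod M (replicate j (i,i)) = (M $ i $ i) ^ j"
  by (induction j) (auto simp: entry_prod_def)

(* Only the word (i,i)^j survives: other derivatives of a power of the i-th coordinate vanish. *)
lemma Dop_funpow_shifted_coord_power:
  fixes M :: "complex^'m::finite^'m"
  assumes y: "near_origin y (0::real^'m)"
  shows "(Dop M ^^ j) (\<lambda>x. shifted_coord i i y x ^ k) 0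
       = (M $ i $ i) ^ j * (\<Prod>t<2*j. of_nat (k - t)) * (\<i> * complex_of_real y) ^ (k - 2*j)"
proof -
  define Pc where "Pc = (\<Prod>t<2*j. (of_nat (k - t) :: complex))"
  have "(Dop M ^^ j) (\<lambda>x. 1 * shifted_coord i i y x ^ k) 0
      = (\<Sum>ps\<in>pair_lists j. entry_prod M ps * pds (pair_word ps)
          (\<lambda>y x. 1 * shifted_coord i i y x ^ k) y 0)"
    by (rule Dop_funpow_eq[OF smooth_shifted_coord_power y])
  also have "\<dots> = (\<Sum>ps\<in>pair_lists j. if ps = replicate j (i,i)
                    then entry_prod M ps * (Pc * shifted_coord i i y 0 ^ (k - 2*j)) else 0)"
  proof (rule sum.cong[OF refl])
    fix ps :: "('m \<times> 'm) list" assume ps: "ps \<in> pair_lists j"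
    then have "length (pair_word ps) = 2 * j" by (simp add: length_pair_word pair_lists_def)
    then show "entry_prod M ps * pds (pair_word ps) (\<lambda>y x. 1 * shifted_coord i i y x ^ k) y 0 =
        (if ps = replicate j (i,i) then entry_prod M ps * (Pc * shifted_coord i i y 0 ^ (k - 2*j)) else 0)"
      using pair_lists_diag_iff[OF ps, of i] pds_shifted_coord_power[OF y, of "pair_word ps" 1 i k]
      by (simp add: pair_word_subset_iff length_pair_word Pc_def)
  qed
  also have "\<dots> = entry_prod M (replicate j (i,i)) * (Pc * shifted_coord i i y 0 ^ (k - 2*j))"
    by (subst sum.delta[OF finite_pair_lists]) (simp add: pair_lists_def)
  finally show ?thesis by (simp add: entry_prod_replicate shifted_coord_self Pc_def mult_ac)
qed

lemma Dop_funpow_add_cmult: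
  fixes f g :: "real \<Rightarrow> real^'m::finite \<Rightarrow> complex"
  assumes f: "smooth f" and g: "smooth g" and c: "continuous_on {-1/4<..<1/4} c"
    and yx: "near_origin y x"
  shows "(Dop M ^^ t) (\<lambda>x. f y x + c y * g y x) x = (Dop M ^^ t) (f y) x + c y * (Dop M ^^ t) (g y) x"
proof -
  have cg: "smooth (\<lambda>y x. c y * g y x)" by (intro smooth_mult smooth_coef g c)
  have "(Dop M ^^ t) (\<lambda>x. f y x + c y * g y x) x
      = (\<Sum>ps\<in>pair_lists t. entry_prod M ps * pds (pair_word ps)
          (\<lambda>y x. f y x + c y * g y x) y x)"
    using Dop_funpow_eq[OF smooth_add[OF f cg] yx] by simp
  also have "\<dots> = (\<Sum>ps\<in>pair_lists t. entry_prod M ps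
                    * (pds (pair_word ps) f y x + c y * pds (pair_word ps) g y x))"
    by (simp add: pds_add[OF f cg yx] pds_cmult[OF g yx])
  finally show ?thesis
    by (simp add: Dop_funpow_eq[OF f yx] Dop_funpow_eq[OF g yx] sum.distrib sum_distrib_left algebra_simps)
qed

lemma amp_0: "amp n k1 k2 i y 0 = (-1)^k1 * \<i>^k2 * A_sqrt n k1 (- ((complex_of_real y)^2))"
  by (simp add: amp_def shifted_sq_0)

(* (-3i/2)^j is the limit of the entries of the inverse Hessian, (-1)^k1 i^k2 the value of
   amp at the origin, and the remaining factors come from differentiating (x_1 + i y)^k2
   2j times in x_1. *)
definition lead_summand_coeff :: "nat \<Rightarrow> nat \<Rightarrow> nat \<Rightarrow> complex" where
  "lead_summand_coeff k1 k2 j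
     = (-3*\<i>/2)^j * ((-1)^k1 * \<i>^k2) * (\<Prod>t<2*j. of_nat (k2 - t)) * \<i>^(k2 - 2*j)"

lemma inverse_hess_diag_pow_amp_0_asymp:
  "(\<lambda>y. inverse (hess_diag i y i) ^ j * amp n k1 k2 i y 0 - (-3*\<i>/2)^j * ((-1)^k1 * \<i>^k2))
     \<in> O[at_right 0](\<lambda>y. complex_of_real y)"
proof -
  have "(\<lambda>y. ((-1)^k1 * \<i>^k2) * (A_sqrt n k1 (- ((complex_of_real y)^2)) - A_sqrt n k1 0))
      \<in> O[at_right 0](\<lambda>y. complex_of_real y)"
    using holomorphic_comp_neg_sq_bigo[OF holomorphic_A_sqrt] by simp
  then have "(\<lambda>y. amp n k1 k2 i y 0 - (-1)^k1 * \<i>^k2) \<in>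
      O[at_right 0](\<lambda>y. complex_of_real y)"
    by (simp add: amp_0 A_sqrt_0 algebra_simps)
  with power_asymp[OF inverse_hess_diag_asymp] show ?thesis by (rule mult_asymp)
qed

lemma Dop_funpow_L_summand_0_eq:
  fixes i :: "'m::finite"
  assumes y: "near_origin y (0::real^'m)"
  shows "(Dop M ^^ j) (L_summand n k1 k2 i 0 y) 0
       = (Dop M ^^ j) (\<lambda>x. (amp n k1 k2 i y x - amp n k1 k2 i y 0) * shifted_coord i i y x ^ k2) 0
         + amp n k1 k2 i y 0 * (M $ i $ i) ^ j * (\<Prod>t<2*j. of_nat (k2 - t)) *
             (\<i> * complex_of_real y) ^ (k2 - 2*j)"
proof -
  have amp0: "continuous_on {-1/4<..<1/4} (\<lambda>y. amp n k1 k2 i y 0)"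
    by (rule smooth_continuous_on[OF smooth_amp]) simp
  have G: "smooth (\<lambda>y x. (amp n k1 k2 i y x - amp n k1 k2 i y 0) * shifted_coord i i y x ^ k2)"
    by (intro smooth_mult smooth_diff smooth_amp smooth_coef[OF amp0] smooth_power smooth_shifted_coord)
  have "L_summand n k1 k2 i 0 y
      = (\<lambda>x. (amp n k1 k2 i y x - amp n k1 k2 i y 0) * shifted_coord i i y x ^ k2
             + amp n k1 k2 i y 0 * shifted_coord i i y x ^ k2)"
    by (simp add: fun_eq_iff L_summand_def a_y_def algebra_simps)
  then show ?thesis
    using Dop_funpow_add_cmult[OF G smooth_shifted_coord_power[of 1, simplified] amp0 y]
    by (simp add: Dop_funpow_shifted_coord_power[OF y] mult_ac)
qed

lemma leading_summand_asymp:
  fixes i :: "'m::finite"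
  assumes "2 * j \<le> k2"
  shows "(\<lambda>y. (Dop (hess_inv i y) ^^ j) (L_summand n k1 k2 i 0 y) 0
            - lead_summand_coeff k1 k2 j * complex_of_real y ^ (k2 - 2*j))
         \<in> O[at_right 0](\<lambda>y. complex_of_real y ^ (k2 - 2*j + 1))"
proof -
  define d where "d = k2 - 2*j"
  define Pc where "Pc = (\<Prod>t<2*j. (of_nat (k2 - t) :: complex))"
  define A0 where "A0 = (-3*\<i>/2)^j * ((-1)^k1 * \<i>^k2 :: complex)"
  define V where "V = (\<lambda>y. inverse (hess_diag i y i) ^ j * amp n k1 k2 i y 0)"
  define G where "G = (\<lambda>y x. (amp n k1 k2 i y x - amp n k1 k2 i y 0) * shifted_coord i i y x ^ k2)"
  have "order_ge G (1 + k2)"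
    unfolding G_def by (intro order_ge_mult order_ge_amp_diff order_ge_shifted_coord_power)
  then have "(\<lambda>y. (Dop (hess_inv i y) ^^ j) (G y) 0) \<in>
      O[at_right 0](\<lambda>y. complex_of_real y ^ (d + 1))"
    by (rule Dop_funpow_bigo[OF hess_inv_bounded]) (use assms in \<open>simp add: d_def\<close>)
  moreover have "(\<lambda>y. (V y - A0) * complex_of_real y ^ d)
      \<in> O[at_right 0](\<lambda>y. complex_of_real y * complex_of_real y ^ d)"
    by (rule landau_o.big.mult_right)
       (use inverse_hess_diag_pow_amp_0_asymp in \<open>simp add: V_def A0_def\<close>)
  then have "(\<lambda>y. Pc * \<i>^d * ((V y - A0) * complex_of_real y ^ d))
      \<in> O[at_right 0](\<lambda>y. complex_of_real y * complex_of_real y ^ d)"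
    by simp
  ultimately have bnd: "(\<lambda>y. (Dop (hess_inv i y) ^^ j) (G y) 0 + Pc * \<i>^d *
      ((V y - A0) * complex_of_real y ^ d))
      \<in> O[at_right 0](\<lambda>y. complex_of_real y ^ (d + 1))"
    by (intro sum_in_bigo(1)) (simp_all add: mult_ac)
  have ev: "eventually (\<lambda>y. (Dop (hess_inv i y) ^^ j) (L_summand n k1 k2 i 0 y) 0
      - lead_summand_coeff k1 k2 j * complex_of_real y ^ d
      = (Dop (hess_inv i y) ^^ j) (G y) 0 + Pc * \<i>^d * ((V y - A0) * complex_of_real y ^ d)) (at_right 0)"
    using eventually_near_origin_0
  proof (rule eventually_mono)
    fix y assume y: "near_origin y (0::real^'m)"
    show "(Dop (hess_inv i y) ^^ j) (L_summand n k1 k2 i 0 y) 0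
      - lead_summand_coeff k1 k2 j * complex_of_real y ^ d
      = (Dop (hess_inv i y) ^^ j) (G y) 0 + Pc * \<i>^d * ((V y - A0) * complex_of_real y ^ d)"
      by (simp add: Dop_funpow_L_summand_0_eq[OF y] hess_inv_def lead_summand_coeff_def
          G_def V_def A0_def Pc_def d_def power_mult_distrib algebra_simps)
  qed
  show ?thesis using landau_o.big.in_cong[OF ev] bnd by (simp add: d_def)
qed

lemma higher_summand_bigo:
  assumes "2 * j \<le> k2" "1 \<le> \<mu>"
  shows "(\<lambda>y. (Dop (hess_inv i y) ^^ (\<mu>+j)) (L_summand n k1 k2 i \<mu> y) 0)
         \<in> O[at_right 0](\<lambda>y. complex_of_real y ^ (k2 - 2*j + 1))"
  by (rule Dop_funpow_bigo[OF hess_inv_bounded order_ge_L_summand]) (use assms in arith)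

lemma Lop_psi_y_asymp:
  assumes "2 * j \<le> k2"
  shows "(\<lambda>y. Lop j (psi_y i y) (a_y n k1 k2 i y)
            - inverse (\<i>^j) * lead_summand_coeff k1 k2 j / (2^j * fact j) * complex_of_real y ^ (k2 - 2*j))
         \<in> O[at_right 0](\<lambda>y. complex_of_real y ^ (k2 - 2*j + 1))"
proof -
  define d where "d = k2 - 2*j"
  define T where "T = (\<lambda>\<mu> y. (Dop (hess_inv i y) ^^ (\<mu>+j)) (L_summand n k1 k2 i \<mu> y) 0
                           / (2^(\<mu>+j) * fact \<mu> * fact (\<mu>+j)))"
  define c where "c = lead_summand_coeff k1 k2 j / (2^j * fact j)"
  have "(\<lambda>y. T 0 y - c * complex_of_real y ^ d) \<in>
      O[at_right 0](\<lambda>y. complex_of_real y ^ (d + 1))"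
    using leading_summand_asymp[OF assms, of i n]
    by (simp add: T_def c_def d_def diff_divide_distrib[symmetric] divide_simps)
  moreover have "(\<lambda>y. \<Sum>\<mu>\<in>{1..2*j}. T \<mu> y) \<in>
      O[at_right 0](\<lambda>y. complex_of_real y ^ (d + 1))"
  proof (rule big_sum_in_bigo)
    fix \<mu> assume "\<mu> \<in> {1..2*j}"
    then show "(\<lambda>y. T \<mu> y) \<in> O[at_right 0](\<lambda>y. complex_of_real y ^ (d + 1))"
      using higher_summand_bigo[OF assms, of \<mu> i n k1] by (simp add: T_def d_def)
  qed
  ultimately have bnd: "(\<lambda>y. inverse (\<i>^j) *
      ((T 0 y - c * complex_of_real y ^ d) + (\<Sum>\<mu>\<in>{1..2*j}. T \<mu> y)))
      \<in> O[at_right 0](\<lambda>y. complex_of_real y ^ (d + 1))"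
    by (simp add: sum_in_bigo(1))
  have ev: "eventually (\<lambda>y. Lop j (psi_y i y) (a_y n k1 k2 i y) - inverse (\<i>^j) * c *
      complex_of_real y ^ d
      = inverse (\<i>^j) * ((T 0 y - c * complex_of_real y ^ d) +
          (\<Sum>\<mu>\<in>{1..2*j}. T \<mu> y))) (at_right 0)"
    using eventually_matrix_inv_hess0[of i]
    by (rule eventually_mono)
       (simp add: Lop_def T_def L_summand_def[abs_def] sum.atLeast_Suc_atMost algebra_simps)
  show ?thesis using landau_o.big.in_cong[OF ev] bnd by (simp add: c_def d_def mult.assoc)
qed

lemma bigo_complex_of_real:
  assumes "f \<in> O[F](g)"
  shows "(\<lambda>x. complex_of_real (f x)) \<in> O[F](\<lambda>x. complex_of_real (g x))"
proof -
  obtain c where c: "c > 0" "eventually (\<lambda>x. norm (f x) \<le> c * norm (g x)) F"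
    using assms by (auto elim!: landau_o.bigE)
  show ?thesis by (rule bigoI[of _ c]) (use c(2) in simp)
qed

lemma yom_bigo_complex: "(\<lambda>w. complex_of_real (yom w)) \<in>
    O[at_right 0](\<lambda>w. complex_of_real w)"
  using bigo_complex_of_real[OF yom_bigo] by simp

lemma yom_minus_linear_bigo_complex:
    "(\<lambda>w. complex_of_real (yom w) - 3/2 * complex_of_real w) \<in>
    O[at_right 0](\<lambda>w. complex_of_real w ^ 2)"
  using bigo_complex_of_real[OF yom_minus_linear_bigo] by simp

lemma power_diff_bigo:
  fixes a b h :: "'a \<Rightarrow> complex"
  assumes a: "a \<in> O[F](h)" and b: "b \<in> O[F](h)" and ab: "(\<lambda>w. a w - b w) \<in>
      O[F](\<lambda>w. h w ^ 2)"
  shows "(\<lambda>w. a w ^ m - b w ^ m) \<in> O[F](\<lambda>w. h w ^ (m + 1))"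
proof (induction m)
  case 0 then show ?case by simp
next
  case (Suc m)
  have "(\<lambda>w. a w * (a w ^ m - b w ^ m)) \<in> O[F](\<lambda>w. h w * h w ^ (m + 1))"
    by (rule landau_o.big_mult[OF a Suc])
  moreover have "(\<lambda>w. (a w - b w) * b w ^ m) \<in> O[F](\<lambda>w. h w ^ 2 * h w ^ m)"
    by (rule landau_o.big_mult[OF ab landau_o.big_power[OF b]])
  ultimately have "(\<lambda>w. a w * (a w ^ m - b w ^ m) + (a w - b w) * b w ^ m) \<in>
      O[F](\<lambda>w. h w ^ (Suc m + 1))"
    by (intro sum_in_bigo(1)) (simp_all add: power_add power2_eq_square mult_ac)
  moreover have "a w * (a w ^ m - b w ^ m) + (a w - b w) * b w ^ m = a w ^ Suc m - b w ^ Suc m" for w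
    by (simp add: algebra_simps)
  ultimately show ?case by simp
qed

lemma bigo_comp_yom:
  fixes K :: "real \<Rightarrow> complex"
  assumes "(\<lambda>y. K y - C * complex_of_real y ^ d) \<in>
      O[at_right 0](\<lambda>y. complex_of_real y ^ (d + 1))"
  shows "(\<lambda>w. K (yom w) - C * (3/2) ^ d * complex_of_real w ^ d)
         \<in> O[at_right 0](\<lambda>w. complex_of_real w ^ (d + 1))"
proof -
  have "(\<lambda>w. K (yom w) - C * complex_of_real (yom w) ^ d)
      \<in> O[at_right 0](\<lambda>w. complex_of_real (yom w) ^ (d + 1))"
    using landau_o.big.compose[OF assms filterlim_yom_at_right] by simp
  also have "(\<lambda>w. complex_of_real (yom w) ^ (d + 1)) \<in>
      O[at_right 0](\<lambda>w. complex_of_real w ^ (d + 1))"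
    by (rule landau_o.big_power[OF yom_bigo_complex])
  finally have "(\<lambda>w. K (yom w) - C * complex_of_real (yom w) ^ d) \<in>
      O[at_right 0](\<lambda>w. complex_of_real w ^ (d + 1))" .
  moreover have "(\<lambda>w. C * (complex_of_real (yom w) ^ d - (3/2 * complex_of_real w) ^ d))
      \<in> O[at_right 0](\<lambda>w. complex_of_real w ^ (d + 1))"
    using power_diff_bigo[OF yom_bigo_complex _ yom_minus_linear_bigo_complex] by simp
  ultimately have "(\<lambda>w. (K (yom w) - C * complex_of_real (yom w) ^ d)
      + C * (complex_of_real (yom w) ^ d - (3/2 * complex_of_real w) ^ d))
      \<in> O[at_right 0](\<lambda>w. complex_of_real w ^ (d + 1))"
    by (rule sum_in_bigo(1))
  then have "(\<lambda>w. K (yom w) - C * (3/2 * complex_of_real w) ^ d) \<in>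
      O[at_right 0](\<lambda>w. complex_of_real w ^ (d + 1))"
    by (simp add: algebra_simps)
  then show ?thesis by (simp only: power_mult_distrib mult.assoc)
qed

lemma prod_diff_eq_fact_div: "m \<le> k \<Longrightarrow> (\<Prod>t<m. (of_nat (k - t) :: complex))
    = fact k / fact (k - m)"
proof (induction m)
  case 0 then show ?case by simp
next
  case (Suc m)
  have km: "k - m = Suc (k - Suc m)" using Suc.prems by simp
  have "(\<Prod>t<Suc m. (of_nat (k - t) :: complex)) = fact k / fact (k - m) * of_nat (k - m)"
    using Suc by simp
  also have "\<dots> = fact k / fact (k - Suc m)"
  proof -
    have f: "(fact (k - m) :: complex) = of_nat (k - m) * fact (k - Suc m)"
      unfolding km by (simp only: fact_Suc of_nat_mult)
    have nz: "(of_nat (k - m) :: complex) \<noteq> 0" using km by simp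
    show ?thesis unfolding f using nz by (simp add: field_simps)
  qed
  finally show ?case .
qed

lemma leading_unit_factor:
  "4^j * ((-3*\<i>/2)^j * inverse (\<i>^j)) / 2^j * (\<i>^(2*j+d) * \<i>^d) = (3::complex)^j * (-1)^d"
proof -
  have "(-3*\<i>/2)^j * inverse (\<i>^j) = (-3/2::complex)^j"
    by (simp add: power_mult_distrib[symmetric] field_simps)
  moreover have "\<i>^(2*j+d) * \<i>^d = (\<i>^2)^(j+d)"
    by (simp only: power_add[symmetric] power_mult[symmetric]) (simp add: algebra_simps)
  then have "\<i>^(2*j+d) * \<i>^d = (-1::complex)^j * (-1)^d"
    by (simp add: power_add)
  moreover have "4^j * (-3/2::complex)^j / 2^j * (-1)^j = 3^j"
    by (simp add: power_mult_distrib[symmetric] power_divide[symmetric])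
  ultimately show ?thesis by (simp add: field_simps)
qed

lemma leading_coeff_eq_ccoef:
  assumes "2 * j \<le> k2"
  shows "4^j * (inverse (\<i>^j) * lead_summand_coeff k1 k2 j / (2^j * fact j)) * (3/2)^(k2 - 2*j)
       = complex_of_real (ccoef k1 k2 j)"
proof -
  obtain d where k2: "k2 = 2*j + d" using assms le_Suc_ex by blast
  then have d: "k2 - 2*j = d" "k2 - j = j + d" by auto
  have "4^j * (inverse (\<i>^j) * lead_summand_coeff k1 k2 j / (2^j * fact j)) * (3/2)^(k2 - 2*j)
      = (4^j * ((-3*\<i>/2)^j * inverse (\<i>^j)) / 2^j * (\<i>^k2 * \<i>^d))
          * ((-1)^k1 * (\<Prod>t<2*j. of_nat (k2 - t)) / fact j * (3/2)^d)"
    unfolding lead_summand_coeff_def d by (simp only: divide_inverse inverse_mult_distrib mult_ac)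
  also have "\<dots> = 3^j * (-1)^d * ((-1)^k1 * (fact k2 / fact d) / fact j * (3/2)^d)"
    using prod_diff_eq_fact_div[OF assms] unfolding d by (simp only: k2 leading_unit_factor)
  also have "\<dots> = complex_of_real (ccoef k1 k2 j)"
    unfolding ccoef_def d by (simp add: k2 power_add power_divide mult_ac)
  finally show ?thesis .
qed

theorem lemma4p7:
  fixes n k1 k2 j :: nat and i :: "'m::finite"
  assumes "n \<ge> 1" and "2*j \<le> k2"
  shows "(\<lambda>w::real. 4^j * Lop j (psi w i) (a_om n k1 k2 i w)
            - complex_of_real (ccoef k1 k2 j) * complex_of_real w ^ (k2 - 2*j))
         \<in> O[at_right 0](\<lambda>w. complex_of_real w ^ (k2 - 2*j + 1))"
proof -
  define C where "C = inverse (\<i>^j) * lead_summand_coeff k1 k2 j / (2^j * fact j)"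
  have "(\<lambda>w. Lop j (psi_y i (yom w)) (a_y n k1 k2 i (yom w)) - C * (3/2) ^ (k2 - 2*j) *
      complex_of_real w ^ (k2 - 2*j))
      \<in> O[at_right 0](\<lambda>w. complex_of_real w ^ (k2 - 2*j + 1))"
    unfolding C_def by (rule bigo_comp_yom[OF Lop_psi_y_asymp[OF assms(2)]])
  then have bnd: "(\<lambda>w. 4^j * (Lop j (psi_y i (yom w)) (a_y n k1 k2 i (yom w))
                   - C * (3/2) ^ (k2 - 2*j) * complex_of_real w ^ (k2 - 2*j)))
      \<in> O[at_right 0](\<lambda>w. complex_of_real w ^ (k2 - 2*j + 1))"
    by simp
  have ev: "eventually (\<lambda>w. 4^j * Lop j (psi w i) (a_om n k1 k2 i w)
            - complex_of_real (ccoef k1 k2 j) * complex_of_real w ^ (k2 - 2*j)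
      = 4^j * (Lop j (psi_y i (yom w)) (a_y n k1 k2 i (yom w))
                   - C * (3/2) ^ (k2 - 2*j) * complex_of_real w ^ (k2 - 2*j))) (at_right 0)"
    using eventually_yom
    by (rule eventually_mono)
       (simp add: psi_eq_psi_y a_om_eq_a_y leading_coeff_eq_ccoef[OF assms(2), symmetric] C_def algebra_simps)
  show ?thesis using landau_o.big.in_cong[OF ev] bnd by simp
qed

end
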